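(* For every $\phi \in L^1(\mathbb{R}_+)$, $f \in L^{\infty}(\mathbb{R}_+)$ and $\omega \in \Omega^*$, \[(U_{\phi}^*f)_{\omega}(x) = \int_{-\infty}^{\infty} f_{\omega}(x+t)\tilde{\phi}(t)\,dt = (f_{\omega} * \phi^* )(x)\quad\text{for every } x\in\mathbb{R},\] where $\tilde\phi$ equals $\phi$ on $[0,\infty)$ and $0$ on $(-\infty,0)$, and $\phi^*(x) = 0$ for $x\ge 0$, $\phi^*(x) = \phi(-x)$ for $x<0$.
   Context: $\mathbb{R}_+=[0,\infty)$; functions are complex-valued. $(U^*_\phi f)(x) = \int_x^\infty f(t)\phi(t-x)\,dt$. Convolution: $(g*h)(x) = \int_{-\infty}^\infty g(x-t)h(t)\,dt$. Let $\beta\mathbb{N}$ be the Stone–Čech compactification of $\mathbb{N}$, $\mathbb{N}^* = \beta\mathbb{N}\setminus\mathbb{N}$, $\tau$ the continuous extension of $n\mapsto n+1$. $\Omega$ is the quotient of $\beta\mathbb{N}\times[0,1]$ identifying $(\eta,1)$ with $(\tau\eta,0)$; $\Omega^*$ consists of classes $(\eta,u)$ with $\eta\in\mathbb{N}^*$; $\tau^s(\eta,u) = (\tau^{[u+s]}\eta, u+s-[u+s])$. Each $\omega=(\eta,u)$ is identified with the ultrafilter on $\mathbb{R}_+$ generated by $\{u+A: A\in\eta\}$. For $g\in L^\infty(\mathbb{R}_+)$, $g_\omega := \omega\text{-}\lim_s g(\cdot+s)$ in the weak* topology of $L^\infty(\mathbb{R}_+)$, extended to $L^\infty(\mathbb{R})$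 by $g_\omega(x) = g_{\tau^{-N}\omega}(N+x)$ for $x\in[-N,0]$. *)

theory Defs
  imports "HOL-Analysis.Analysis"
begin

definition Linf_on :: "real set \<Rightarrow> (real \<Rightarrow> complex) set" where
  "Linf_on S = {h. h \<in> borel_measurable lborel \<and>
      (\<exists>C. AE x in lborel. x \<in> S \<longrightarrow> norm (h x) \<le> C)}"

text \<open>Points of the Stone-Cech compactification of N are the ultrafilters on N.\<close>
definition nat_ultrafilter :: "nat filter \<Rightarrow> bool" where
  "nat_ultrafilter F \<longleftrightarrow> F \<noteq> bot \<and>
     (\<forall>P. eventually P F \<or> eventually (\<lambda>n. \<not> P n) F)"

text \<open>N* = beta N minus N: the non-principal ultrafilters.\<close>
definition Nstar :: "nat filter set" where
  "Nstar = {F. nat_ultrafilter F \<and> (\<forall>n. F \<noteq> principal {n})}"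

text \<open>tau: continuous extension of n |-> n+1 (image ultrafilter).\<close>
definition tau :: "nat filter \<Rightarrow> nat filter" where
  "tau F = filtermap Suc F"

text \<open>tau^(-N) on N* (tau is a bijection of N*).\<close>
definition tau_inv :: "nat \<Rightarrow> nat filter \<Rightarrow> nat filter" where
  "tau_inv N \<eta> = (THE \<eta>'. \<eta>' \<in> Nstar \<and> (tau ^^ N) \<eta>' = \<eta>)"

text \<open>The point omega = (eta,u) of Omega, viewed as the ultrafilter on R+ generated by
  the sets u + A, A in eta.\<close>
definition omega_filter :: "nat filter \<Rightarrow> real \<Rightarrow> real filter" where
  "omega_filter \<eta> u = filtermap (\<lambda>n. u + real n) \<eta>"

text \<open>weak-star limit along the filter F of the family s |-> G s in L-infinity(R+) = L1(R+)';
  a representative is chosen (it is unique almost everywhere on R+).\<close>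
definition wstar_lim :: "real filter \<Rightarrow> (real \<Rightarrow> real \<Rightarrow> complex) \<Rightarrow> (real \<Rightarrow> complex)" where
  "wstar_lim F G = (SOME h. h \<in> Linf_on {0..} \<and>
     (\<forall>\<psi>::real \<Rightarrow> complex. set_integrable lborel {0..} \<psi> \<longrightarrow>
        ((\<lambda>s. set_lebesgue_integral lborel {0..} (\<lambda>x. G s x * \<psi> x))
           \<longlongrightarrow> set_lebesgue_integral lborel {0..} (\<lambda>x. h x * \<psi> x)) F))"

definition g_omega_pos :: "(real \<Rightarrow> complex) \<Rightarrow> nat filter \<Rightarrow> real \<Rightarrow> real \<Rightarrow> complex" where
  "g_omega_pos g \<eta> u = wstar_lim (omega_filter \<eta> u) (\<lambda>s x. g (x + s))"

text \<open>Extension to R: g_omega(x) = g_{tau^(-N) omega}(N + x) for x in [-N,0];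
  here tau^(-N) (eta,u) = (tau^(-N) eta, u) and we take N = ceiling(-x).\<close>
definition g_omega :: "(real \<Rightarrow> complex) \<Rightarrow> nat filter \<Rightarrow> real \<Rightarrow> real \<Rightarrow> complex" where
  "g_omega g \<eta> u x =
     (if 0 \<le> x then g_omega_pos g \<eta> u x
      else (let N = nat \<lceil>- x\<rceil> in g_omega_pos g (tau_inv N \<eta>) u (real N + x)))"

definition Ustar :: "(real \<Rightarrow> complex) \<Rightarrow> (real \<Rightarrow> complex) \<Rightarrow> real \<Rightarrow> complex" where
  "Ustar \<phi> f x = set_lebesgue_integral lborel {x..} (\<lambda>t. f t * \<phi> (t - x))"

definition conv :: "(real \<Rightarrow> complex) \<Rightarrow> (real \<Rightarrow> complex) \<Rightarrow> real \<Rightarrow> complex" where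
  "conv g h x = integral\<^sup>L lborel (\<lambda>t. g (x - t) * h t)"

definition phi_tilde :: "(real \<Rightarrow> complex) \<Rightarrow> real \<Rightarrow> complex" where
  "phi_tilde \<phi> t = (if 0 \<le> t then \<phi> t else 0)"

definition phi_star :: "(real \<Rightarrow> complex) \<Rightarrow> real \<Rightarrow> complex" where
  "phi_star \<phi> t = (if 0 \<le> t then 0 else \<phi> (- t))"

end

theory Submission
  imports Defs "HOL-Analysis.Radon_Nikodym"
begin

text \<open>
  Weak-star limits exist and are unique: along an ultrafilter, the pairings of the bounded family
  g(\<cdot> + s) with a fixed \<psi> \<in> L1 converge by compactness of discs, and the limit functional is
  represented by an L-infinity function through Radon-Nikodym. So it suffices to identify the
  weak-star limit of (U*_\<phi> f)(\<cdot> + s). By Fubini, pairing it with \<psi> \<in> L1(R+) is pairing f(\<cdot> + s)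
  with the convolution \<psi> * \<phi>, again in L1(R+); hence on R+ the limit is x \<mapsto> \<integral> f_\<omega>(x + t) \<phi>(t) dt.
  For x < 0, a shift by an integer N commutes with the \<omega>-limit, so f_\<omega> = f_{\<tau>^-N \<omega>}(N + \<cdot>)
  almost everywhere. The identity with f_\<omega> * \<phi>* is the substitution t \<mapsto> -t.
\<close>

section \<open>Ultrafilters and the shift on N*\<close>

definition is_ultrafilter :: "'a filter \<Rightarrow> bool" where
  "is_ultrafilter F \<longleftrightarrow> F \<noteq> bot \<and> (\<forall>P. eventually P F \<or> eventually (\<lambda>x. \<not> P x) F)"

lemma nat_ultrafilter_eq_is_ultrafilter: "nat_ultrafilter = is_ultrafilter"
  unfolding nat_ultrafilter_def is_ultrafilter_def ..

lemma is_ultrafilter_filtermap: "is_ultrafilter F \<Longrightarrow> is_ultrafilter (filtermap g F)"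
  unfolding is_ultrafilter_def by (auto simp: eventually_filtermap filtermap_bot_iff)

lemma is_ultrafilter_tendsto_compact:
  fixes f :: "'a \<Rightarrow> 'b::topological_space"
  assumes F: "is_ultrafilter F" and K: "compact K" and fK: "eventually (\<lambda>s. f s \<in> K) F"
  shows "\<exists>l. (f \<longlongrightarrow> l) F"
proof -
  let ?G = "filtermap f F"
  have G: "is_ultrafilter ?G" using F by (rule is_ultrafilter_filtermap)
  have "?G \<noteq> bot" "eventually (\<lambda>x. x \<in> K) ?G"
    using G fK by (auto simp: is_ultrafilter_def eventually_filtermap)
  then obtain l where l: "inf (nhds l) ?G \<noteq> bot"
    using K unfolding compact_filter by blast
  have "eventually (\<lambda>x. f x \<in> S) F" if "open S" "l \<in> S" for S
  proof (rule ccontr)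
    assume "\<not> eventually (\<lambda>x. f x \<in> S) F"
    with G have "eventually (\<lambda>y. y \<notin> S) ?G" by (auto simp: is_ultrafilter_def eventually_filtermap)
    moreover have "eventually (\<lambda>y. y \<in> S) (nhds l)" using that by (rule eventually_nhds_in_open)
    ultimately have "eventually (\<lambda>_. False) (inf (nhds l) ?G)" unfolding eventually_inf by blast
    with l show False by (simp add: eventually_False)
  qed
  then show ?thesis unfolding tendsto_def by blast
qed

lemma is_ultrafilter_tendsto_Lim:
  fixes f :: "'a \<Rightarrow> 'b::{heine_borel, real_normed_vector}"
  assumes "is_ultrafilter F" "eventually (\<lambda>s. norm (f s) \<le> r) F"
  shows "(f \<longlongrightarrow> Lim F f) F"
proof -
  have "eventually (\<lambda>s. f s \<in> cball 0 r) F" using assms(2) by (rule eventually_mono) simp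
  then obtain l where l: "(f \<longlongrightarrow> l) F"
    using is_ultrafilter_tendsto_compact[OF assms(1) compact_cball] by blast
  moreover have "F \<noteq> bot" using assms(1) by (simp add: is_ultrafilter_def)
  ultimately have "Lim F f = l" by (simp add: tendsto_Lim)
  with l show ?thesis by simp
qed

lemma filtermap_cong_eventually:
  "eventually (\<lambda>x. f x = g x) F \<Longrightarrow> filtermap f F = filtermap g F"
  by (rule filter_eqI) (auto simp: eventually_filtermap elim: eventually_elim2)

lemma filtermap_inj_eq:
  assumes "inj g" "filtermap g F1 = filtermap g F2" shows "F1 = F2"
proof (rule filter_eqI)
  fix P
  have "eventually P F1 \<longleftrightarrow> eventually (\<lambda>y. P (inv g y)) (filtermap g F1)"
    using assms(1) by (simp add: eventually_filtermap)
  also have "\<dots> \<longleftrightarrow> eventually P F2"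
    using assms by (simp add: eventually_filtermap)
  finally show "eventually P F1 \<longleftrightarrow> eventually P F2" .
qed

lemma tau_pow: "(tau ^^ k) F = filtermap (\<lambda>n. n + k) F"
  by (induction k) (auto simp: tau_def filtermap_filtermap filtermap_ident)

lemma Nstar_eventually_neq:
  assumes "F \<in> Nstar" shows "eventually (\<lambda>n. n \<noteq> m) F"
proof (rule ccontr)
  assume "\<not> eventually (\<lambda>n. n \<noteq> m) F"
  moreover have uf: "is_ultrafilter F" and np: "F \<noteq> principal {m}"
    using assms by (auto simp: Nstar_def nat_ultrafilter_eq_is_ultrafilter)
  ultimately have ev: "eventually (\<lambda>n. n = m) F" unfolding is_ultrafilter_def by force
  have "eventually P F \<longleftrightarrow> P m" for P
  proof
    assume "eventually P F"
    with ev have "eventually (\<lambda>n. n = m \<and> P n) F" by (rule eventually_conj)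
    then have "eventually (\<lambda>_. P m) F" by (rule eventually_mono) blast
    with uf show "P m" by (auto simp: is_ultrafilter_def)
  qed (use ev in \<open>auto elim: eventually_mono\<close>)
  then have "F = principal {m}" by (intro filter_eqI) (simp add: eventually_principal)
  with np show False ..
qed

lemma Nstar_eventually_ge:
  assumes "F \<in> Nstar" shows "eventually (\<lambda>n. k \<le> n) F"
proof -
  have "eventually (\<lambda>n. \<forall>m\<in>{..<k}. n \<noteq> m) F"
    by (rule eventually_ball_finite) (auto intro: Nstar_eventually_neq[OF assms])
  then show ?thesis by (rule eventually_mono) (auto simp: not_less[symmetric])
qed

lemma Nstar_filtermap:
  assumes "F \<in> Nstar" and "\<And>n. n - k \<le> g n" shows "filtermap g F \<in> Nstar"
  unfolding Nstar_def
proof (intro CollectI conjI allI notI)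
  show "nat_ultrafilter (filtermap g F)"
    using assms(1) by (auto simp: Nstar_def nat_ultrafilter_eq_is_ultrafilter intro: is_ultrafilter_filtermap)
  fix m assume "filtermap g F = principal {m}"
  moreover have "eventually (\<lambda>x. x \<noteq> m) (filtermap g F)"
    unfolding eventually_filtermap using Nstar_eventually_ge[OF assms(1), of "m + k + 1"]
  proof (rule eventually_mono)
    fix n assume "m + k + 1 \<le> n"
    then show "g n \<noteq> m" using assms(2)[of n] by linarith
  qed
  ultimately have "eventually (\<lambda>x. x \<noteq> m) (principal {m})" by (simp only:)
  then show False by (simp add: eventually_principal)
qed

lemma tau_pow_inj: "(tau ^^ N) \<eta>1 = (tau ^^ N) \<eta>2 \<Longrightarrow> \<eta>1 = \<eta>2"
  unfolding tau_pow by (rule filtermap_inj_eq) (auto simp: inj_def)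

lemma tau_pow_filtermap_diff:
  assumes "\<eta> \<in> Nstar" shows "(tau ^^ N) (filtermap (\<lambda>n. n - N) \<eta>) = \<eta>"
proof -
  have "(tau ^^ N) (filtermap (\<lambda>n. n - N) \<eta>) = filtermap (\<lambda>n. n) \<eta>"
    unfolding tau_pow filtermap_filtermap
    by (rule filtermap_cong_eventually) (use Nstar_eventually_ge[OF assms, of N] in \<open>auto elim: eventually_mono\<close>)
  then show ?thesis unfolding filtermap_ident .
qed

lemma filtermap_diff_Nstar: "\<eta> \<in> Nstar \<Longrightarrow> filtermap (\<lambda>n. n - N) \<eta> \<in> Nstar"
  by (rule Nstar_filtermap[where k=N]) auto

lemma tau_inv_eq:
  assumes "\<eta> \<in> Nstar" shows "tau_inv N \<eta> = filtermap (\<lambda>n. n - N) \<eta>"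
proof -
  have "filtermap (\<lambda>n. n - N) \<eta> \<in> Nstar \<and> (tau ^^ N) (filtermap (\<lambda>n. n - N) \<eta>) = \<eta>"
    using assms by (simp add: filtermap_diff_Nstar tau_pow_filtermap_diff)
  moreover have "\<eta>' = filtermap (\<lambda>n. n - N) \<eta>" if "\<eta>' \<in> Nstar \<and> (tau ^^ N) \<eta>' = \<eta>" for \<eta>'
    by (rule tau_pow_inj[of N]) (use that tau_pow_filtermap_diff[OF assms] in simp)
  ultimately show ?thesis unfolding tau_inv_def by (rule the_equality)
qed

lemma tau_inv_Nstar: "\<eta> \<in> Nstar \<Longrightarrow> tau_inv N \<eta> \<in> Nstar"
  by (simp add: tau_inv_eq filtermap_diff_Nstar)

lemma tau_inv_0: "\<eta> \<in> Nstar \<Longrightarrow> tau_inv 0 \<eta> = \<eta>"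
  by (simp add: tau_inv_eq filtermap_ident)

lemma tau_pow_tau_inv:
  assumes "\<eta> \<in> Nstar" "M \<le> N"
  shows "(tau ^^ (N - M)) (tau_inv N \<eta>) = tau_inv M \<eta>"
  unfolding tau_inv_eq[OF assms(1)] tau_pow filtermap_filtermap
  by (rule filtermap_cong_eventually) (use Nstar_eventually_ge[OF assms(1), of N] assms(2) in \<open>auto elim: eventually_mono\<close>)

lemma omega_filter_is_ultrafilter: "\<eta> \<in> Nstar \<Longrightarrow> is_ultrafilter (omega_filter \<eta> u)"
  unfolding omega_filter_def Nstar_def nat_ultrafilter_eq_is_ultrafilter by (auto intro: is_ultrafilter_filtermap)

lemma omega_filter_nonneg: "0 \<le> u \<Longrightarrow> eventually (\<lambda>s. 0 \<le> s) (omega_filter \<eta> u)"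
  unfolding omega_filter_def eventually_filtermap by simp

lemma omega_filter_tau_pow:
  "omega_filter ((tau ^^ k) \<eta>) u = filtermap (\<lambda>s. real k + s) (omega_filter \<eta> u)"
  unfolding omega_filter_def tau_pow filtermap_filtermap by (simp add: algebra_simps)

section \<open>Bounded set functions and the dual of L1\<close>

lemma AE_lborel_shift:
  fixes s :: real
  assumes "AE y in lborel. P y" shows "AE x in lborel. P (x + s)"
proof -
  from assms obtain N where "{y \<in> space lborel. \<not> P y} \<subseteq> N" "emeasure lborel N = 0" "N \<in> sets lborel"
    by (rule AE_E)
  then show ?thesis
    by (intro AE_I'[OF null_sets_translation[of N "- s"]]) auto
qed

lemma integrable_shift:
  fixes f :: "real \<Rightarrow> 'b::{banach, second_countable_topology}"
  shows "integrable lborel f \<Longrightarrow> integrable lborel (\<lambda>y. f (y + a))"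
  using lborel_integrable_real_affine[of f 1 a] by (simp add: add.commute)

lemma integral_shift:
  fixes f :: "real \<Rightarrow> 'b::{banach, second_countable_topology}"
  shows "(\<integral>y. f (y + a) \<partial>lborel) = (\<integral>y. f y \<partial>lborel)"
  using lborel_integral_real_affine[of 1 f a] by (simp add: add.commute)

lemma integrable_mult_AE_bounded:
  fixes h f :: "'a \<Rightarrow> complex"
  assumes [measurable]: "h \<in> borel_measurable M" and hB: "AE x in M. norm (h x) \<le> B"
    and f: "integrable M f"
  shows "integrable M (\<lambda>x. h x * f x)"
proof (rule Bochner_Integration.integrable_bound[of _ "\<lambda>x. of_real B * f x"])
  show "integrable M (\<lambda>x. of_real B * f x)" using f by simp
  show "(\<lambda>x. h x * f x) \<in> borel_measurable M"
    using f[THEN borel_measurable_integrable] by measurable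
  show "AE x in M. norm (h x * f x) \<le> norm (of_real B * f x)"
    using hB by (rule eventually_mono) (auto simp: norm_mult intro: mult_right_mono)
qed

lemma integrable_indicator_AE_bounded:
  fixes g :: "'a \<Rightarrow> 'b::{banach, second_countable_topology}"
  assumes "g \<in> borel_measurable M" "A \<in> sets M" "emeasure M A < \<infinity>"
    and "AE x in M. x \<in> A \<longrightarrow> norm (g x) \<le> B"
  shows "integrable M (\<lambda>x. indicator A x *\<^sub>R g x)"
proof (rule Bochner_Integration.integrable_bound[of _ "\<lambda>x. indicator A x *\<^sub>R B"])
  show "integrable M (\<lambda>x. indicator A x *\<^sub>R B)"
    using assms by (intro integrable_scaleR_left integrable_real_indicator) auto
  show "(\<lambda>x. indicator A x *\<^sub>R g x) \<in> borel_measurable M" using assms by measurable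
  show "AE x in M. norm (indicator A x *\<^sub>R g x) \<le> norm (indicator A x *\<^sub>R B)"
    using assms(4) by (rule eventually_mono) (auto simp: indicator_def)
qed

lemma AE_le_of_set_integral_le:
  fixes k :: "real \<Rightarrow> real"
  assumes [measurable]: "k \<in> borel_measurable lborel"
    and le: "\<And>A. A \<in> sets lborel \<Longrightarrow> emeasure lborel A < \<infinity> \<Longrightarrow>
      set_integrable lborel A k \<and> set_lebesgue_integral lborel A k \<le> C * measure lborel A"
  shows "AE x in lborel. k x \<le> C"
proof -
  define B where "B = {x. C < k x}"
  have "AE x in lborel. x \<notin> B \<inter> {-real n..real n}" for n
  proof -
    define A where "A = B \<inter> {-real n..real n}"
    have A[measurable]: "A \<in> sets lborel" unfolding A_def B_def by measurable
    have fin: "emeasure lborel A < \<infinity>"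
      unfolding A_def by (rule le_less_trans[OF emeasure_mono[of _ "{-real n..real n}"]]) auto
    define g where "g x = indicator A x * (k x - C)" for x
    have "integrable lborel (\<lambda>x. indicator A x *\<^sub>R k x)" "integrable lborel (\<lambda>x. indicator A x *\<^sub>R C)"
      using le[OF A fin] fin A by (auto simp: set_integrable_def intro!: integrable_real_indicator)
    then have gi: "integrable lborel g" and "integral\<^sup>L lborel g = set_lebesgue_integral lborel A k - C * measure lborel A"
      unfolding g_def set_lebesgue_integral_def using fin
      by (auto simp: right_diff_distrib Bochner_Integration.integral_diff mult.commute)
    then have "integral\<^sup>L lborel g \<le> 0" using le[OF A fin] by simp
    moreover have g0: "\<And>x. 0 \<le> g x" unfolding g_def A_def B_def by (auto simp: indicator_def)
    ultimately have "AE x in lborel. g x = 0"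
      using integral_nonneg_eq_0_iff_AE[OF gi] by (simp add: Bochner_Integration.integral_nonneg order_antisym)
    then show ?thesis by (rule eventually_mono) (auto simp: g_def A_def B_def indicator_def)
  qed
  then have "AE x in lborel. \<forall>n. x \<notin> B \<inter> {-real n..real n}" by (simp add: AE_all_countable)
  then show ?thesis
  proof (rule eventually_mono)
    fix x assume "\<forall>n. x \<notin> B \<inter> {-real n..real n}"
    then have "x \<notin> B \<inter> {-real (nat \<lceil>\<bar>x\<bar>\<rceil>)..real (nat \<lceil>\<bar>x\<bar>\<rceil>)}" ..
    moreover have "x \<in> {-real (nat \<lceil>\<bar>x\<bar>\<rceil>)..real (nat \<lceil>\<bar>x\<bar>\<rceil>)}" by auto linarith+
    ultimately show "k x \<le> C" unfolding B_def by (auto simp: not_less)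
  qed
qed

lemma countably_additive_shifted_set_function:
  fixes m :: "real set \<Rightarrow> real"
  assumes C: "0 < C"
    and bnd: "\<And>A. A \<in> sets lborel \<Longrightarrow> emeasure lborel A < \<infinity> \<Longrightarrow> \<bar>m A\<bar> \<le> C * measure lborel A"
    and add: "\<And>A. range A \<subseteq> sets lborel \<Longrightarrow> disjoint_family A \<Longrightarrow> emeasure lborel (\<Union>i. A i) < \<infinity>
      \<Longrightarrow> (\<lambda>i. m (A i)) sums m (\<Union>i. A i)"
  defines "\<mu> \<equiv> \<lambda>A. if emeasure lborel A < \<infinity> then ennreal (m A + 2*C*measure lborel A) else \<infinity>"
  shows "countably_additive (sets borel) \<mu>"
proof (unfold countably_additive_def, intro allI impI)
  have nonneg: "0 \<le> m A + 2*C*measure lborel A" "C * measure lborel A \<le> m A + 2*C*measure lborel A"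
    if "A \<in> sets lborel" "emeasure lborel A < \<infinity>" for A
    using bnd[OF that] C measure_nonneg[of lborel A] by (auto simp: abs_le_iff)
  fix A :: "nat \<Rightarrow> real set"
  assume A: "range A \<subseteq> sets borel" "disjoint_family A" "\<Union>(range A) \<in> sets borel"
  show "(\<Sum>i. \<mu> (A i)) = \<mu> (\<Union>(range A))"
  proof cases
    assume fin: "emeasure lborel (\<Union>(range A)) < \<infinity>"
    have fin_i: "emeasure lborel (A i) < \<infinity>" for i
      by (rule le_less_trans[OF emeasure_mono fin]) (use A in auto)
    have sums: "(\<lambda>i. m (A i) + 2*C*measure lborel (A i)) sums (m (\<Union>(range A)) + 2*C*measure lborel (\<Union>(range A)))"
      by (intro sums_add sums_mult add measure_UNION) (use A fin in auto)
    have "(\<Sum>i. \<mu> (A i)) = (\<Sum>i. ennreal (m (A i) + 2*C*measure lborel (A i)))"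
      using fin_i by (simp add: \<mu>_def)
    also have "\<dots> = ennreal (\<Sum>i. m (A i) + 2*C*measure lborel (A i))"
      by (rule suminf_ennreal2) (use nonneg fin_i A sums in \<open>auto simp: sums_iff\<close>)
    also have "\<dots> = \<mu> (\<Union>(range A))" using sums fin by (simp add: \<mu>_def sums_iff)
    finally show ?thesis .
  next
    assume inf: "\<not> emeasure lborel (\<Union>(range A)) < \<infinity>"
    have ge: "ennreal C * emeasure lborel B \<le> \<mu> B" if "B \<in> sets lborel" for B
    proof cases
      assume "emeasure lborel B < \<infinity>"
      then show ?thesis using nonneg[OF that] C
        by (simp add: \<mu>_def emeasure_eq_ennreal_measure ennreal_mult[symmetric] ennreal_leI)
    qed (simp add: \<mu>_def)
    have "ennreal C * emeasure lborel (\<Union>(range A)) = (\<Sum>i. ennreal C * emeasure lborel (A i))"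
      using A by (simp add: ennreal_suminf_cmult suminf_emeasure)
    also have "\<dots> \<le> (\<Sum>i. \<mu> (A i))" by (intro suminf_le ge summableI) (use A in auto)
    finally have "(\<Sum>i. \<mu> (A i)) = \<infinity>"
      using inf C by (simp add: top_unique ennreal_mult_top not_less)
    then show ?thesis using inf by (simp add: \<mu>_def)
  qed
qed

lemma set_integral_enn2real_density:
  assumes [measurable]: "d \<in> borel_measurable M" "A \<in> sets M"
    and r: "(\<integral>\<^sup>+x. d x * indicator A x \<partial>M) = ennreal r" "0 \<le> r"
  shows "set_integrable M A (\<lambda>x. enn2real (d x))" "set_lebesgue_integral M A (\<lambda>x. enn2real (d x)) = r"
proof -
  have "AE x in M. d x * indicator A x \<noteq> \<infinity>"
    by (rule nn_integral_noteq_infinite) (auto simp: r)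
  then have "AE x in M. x \<in> A \<longrightarrow> d x \<noteq> \<infinity>"
    by (rule eventually_mono) (auto simp: indicator_def)
  then have eq: "(\<integral>\<^sup>+x. ennreal (indicator A x * enn2real (d x)) \<partial>M) = ennreal r"
    unfolding r(1)[symmetric]
    by (intro nn_integral_cong_AE) (auto elim!: eventually_mono simp: indicator_def less_top)
  show "set_integrable M A (\<lambda>x. enn2real (d x))"
    unfolding set_integrable_def by (rule integrableI_bounded) (auto simp: eq abs_mult)
  show "set_lebesgue_integral M A (\<lambda>x. enn2real (d x)) = r"
    unfolding set_lebesgue_integral_def by (subst integral_eq_nn_integral) (auto simp: eq r(2))
qed

text \<open>The bound |m A| \<le> C \<lambda>(A) makes m + 2 C \<lambda> a positive measure, absolutely continuous with
  respect to \<lambda>, so Radon-Nikodym provides its density.\<close>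

lemma shifted_set_function_density:
  fixes m :: "real set \<Rightarrow> real"
  assumes C: "0 < C"
    and bnd: "\<And>A. A \<in> sets lborel \<Longrightarrow> emeasure lborel A < \<infinity> \<Longrightarrow> \<bar>m A\<bar> \<le> C * measure lborel A"
    and add: "\<And>A. range A \<subseteq> sets lborel \<Longrightarrow> disjoint_family A \<Longrightarrow> emeasure lborel (\<Union>i. A i) < \<infinity>
      \<Longrightarrow> (\<lambda>i. m (A i)) sums m (\<Union>i. A i)"
  obtains d where "d \<in> borel_measurable lborel"
    "\<And>A. A \<in> sets lborel \<Longrightarrow> emeasure lborel A < \<infinity> \<Longrightarrow>
       (\<integral>\<^sup>+x. d x * indicator A x \<partial>lborel) = ennreal (m A + 2*C*measure lborel A)"
proof -
  define \<mu> where "\<mu> = (\<lambda>A. if emeasure lborel A < \<infinity> then ennreal (m A + 2*C*measure lborel A) else \<infinity>)"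
  define N where "N = measure_of UNIV (sets borel) \<mu>"
  have sa: "sigma_algebra UNIV (sets (borel::real measure))"
    using sets.sigma_algebra_axioms[of "borel::real measure"] by simp
  have pos: "positive (sets borel) \<mu>" using bnd[of "{}"] by (simp add: positive_def \<mu>_def)
  have ca: "countably_additive (sets borel) \<mu>"
    unfolding \<mu>_def by (rule countably_additive_shifted_set_function[OF C bnd add])
  have eN: "emeasure N A = \<mu> A" if "A \<in> sets borel" for A
    unfolding N_def by (rule emeasure_measure_of_sigma[OF sa pos ca that])
  have sN: "sets N = sets lborel"
    unfolding N_def by (simp add: sets_measure_of sigma_algebra.sigma_sets_eq[OF sa])
  have "absolutely_continuous lborel N"
    unfolding absolutely_continuous_def
  proof
    fix A :: "real set" assume "A \<in> null_sets lborel"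
    then have A: "A \<in> sets lborel" "emeasure lborel A = 0" by auto
    then have "m A = 0" using bnd[of A] by (auto simp: measure_def)
    with A show "A \<in> null_sets N" using eN[of A] sN by (auto simp: \<mu>_def measure_def)
  qed
  then obtain d where d[measurable]: "d \<in> borel_measurable lborel" and dN: "density lborel d = N"
    using sigma_finite_measure.Radon_Nikodym[OF sigma_finite_lborel _ sN] by blast
  have "(\<integral>\<^sup>+x. d x * indicator A x \<partial>lborel) = ennreal (m A + 2*C*measure lborel A)"
    if A: "A \<in> sets lborel" "emeasure lborel A < \<infinity>" for A
    using emeasure_density[OF d A(1)] dN eN[of A] A by (simp add: \<mu>_def)
  with d show ?thesis by (rule that)
qed

lemma bounded_set_function_density:
  fixes m :: "real set \<Rightarrow> real"
  assumes C: "0 < C"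
    and bnd: "\<And>A. A \<in> sets lborel \<Longrightarrow> emeasure lborel A < \<infinity> \<Longrightarrow> \<bar>m A\<bar> \<le> C * measure lborel A"
    and add: "\<And>A. range A \<subseteq> sets lborel \<Longrightarrow> disjoint_family A \<Longrightarrow> emeasure lborel (\<Union>i. A i) < \<infinity>
      \<Longrightarrow> (\<lambda>i. m (A i)) sums m (\<Union>i. A i)"
  obtains k where "k \<in> borel_measurable lborel" "AE x in lborel. \<bar>k x\<bar> \<le> C"
    "\<And>A. A \<in> sets lborel \<Longrightarrow> emeasure lborel A < \<infinity> \<Longrightarrow>
       set_integrable lborel A k \<and> m A = set_lebesgue_integral lborel A k"
proof -
  obtain d where d[measurable]: "d \<in> borel_measurable lborel"
    and r: "\<And>A. A \<in> sets lborel \<Longrightarrow> emeasure lborel A < \<infinity> \<Longrightarrow>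
       (\<integral>\<^sup>+x. d x * indicator A x \<partial>lborel) = ennreal (m A + 2*C*measure lborel A)"
    using shifted_set_function_density[OF C bnd add] by blast
  define k where "k x = enn2real (d x) - 2*C" for x
  have km[measurable]: "k \<in> borel_measurable lborel" unfolding k_def by measurable
  have k: "set_integrable lborel A k \<and> m A = set_lebesgue_integral lborel A k"
    if A[measurable]: "A \<in> sets lborel" and fin: "emeasure lborel A < \<infinity>" for A
  proof -
    have "0 \<le> m A + 2*C*measure lborel A"
      using bnd[OF A fin] C measure_nonneg[of lborel A] by (auto simp: abs_le_iff)
    note density = set_integral_enn2real_density[OF d A r[OF A fin] this]
    moreover have "set_integrable lborel A (\<lambda>_. 2*C)"
      using fin A by (simp add: set_integrable_def integrable_real_indicator)
    ultimately show ?thesis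
      unfolding k_def using fin A by (simp add: set_integral_diff set_integral_const measure_def)
  qed
  have "AE x in lborel. k x \<le> C"
    using k bnd by (intro AE_le_of_set_integral_le[OF km]) force
  moreover have "AE x in lborel. - k x \<le> C"
  proof (rule AE_le_of_set_integral_le)
    fix A :: "real set" assume A: "A \<in> sets lborel" "emeasure lborel A < \<infinity>"
    then have "set_integrable lborel A (\<lambda>x. - k x)"
      using k[OF A] by (simp add: set_integrable_def)
    then show "set_integrable lborel A (\<lambda>x. - k x) \<and> set_lebesgue_integral lborel A (\<lambda>x. - k x) \<le> C * measure lborel A"
      using k[OF A] bnd[OF A] by (auto simp: set_integral_uminus)
  qed simp
  ultimately have bounded: "AE x in lborel. \<bar>k x\<bar> \<le> C" by eventually_elim auto
  show ?thesis by (rule that[OF km bounded k])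
qed

lemma integral_indicator_Re_Im:
  fixes kr ki :: "'a \<Rightarrow> real"
  assumes "set_integrable M A kr" "set_integrable M A ki"
  shows "(\<integral>x. (complex_of_real (kr x) + \<i> * complex_of_real (ki x)) * indicator A x \<partial>M)
    = complex_of_real (set_lebesgue_integral M A kr) + \<i> * complex_of_real (set_lebesgue_integral M A ki)"
proof -
  define a where "a x = complex_of_real (indicator A x * kr x)" for x
  define b where "b x = complex_of_real (indicator A x * ki x)" for x
  have "integrable M a" "integrable M b"
    using assms unfolding a_def b_def set_integrable_def
    by (auto intro!: integrable_of_real simp del: of_real_mult)
  moreover have "(\<lambda>x. (complex_of_real (kr x) + \<i> * complex_of_real (ki x)) * indicator A x) = (\<lambda>x. a x + \<i> * b x)"
    by (auto simp: a_def b_def indicator_def)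
  ultimately have "(\<integral>x. (complex_of_real (kr x) + \<i> * complex_of_real (ki x)) * indicator A x \<partial>M)
      = integral\<^sup>L M a + \<i> * integral\<^sup>L M b"
    by (simp add: Bochner_Integration.integral_add)
  then show ?thesis
    unfolding a_def b_def integral_complex_of_real by (simp add: set_lebesgue_integral_def)
qed

lemma integrable_complex_indicator:
  assumes "A \<in> sets M" "emeasure M A < \<infinity>" shows "integrable M (\<lambda>x. indicator A x :: complex)"
proof -
  have "(\<lambda>x. indicator A x *\<^sub>R (1::complex)) = indicator A" by (auto simp: indicator_def)
  then show ?thesis using integrable_indicator[OF assms, of "1::complex"] by simp
qed

lemma L1_norm_diff_tendsto_zero:
  fixes f :: "'a \<Rightarrow> 'b::{banach, second_countable_topology}"
  assumes "\<And>i. integrable M (s i)" "integrable M f"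
    and "\<And>x. x \<in> space M \<Longrightarrow> (\<lambda>i. s i x) \<longlonglongrightarrow> f x"
    and "\<And>i x. x \<in> space M \<Longrightarrow> norm (s i x) \<le> 2 * norm (f x)"
  shows "(\<lambda>i. \<integral>x. norm (f x - s i x) \<partial>M) \<longlonglongrightarrow> 0"
proof -
  have "(\<lambda>i. \<integral>x. norm (f x - s i x) \<partial>M) \<longlonglongrightarrow> (\<integral>x. 0 \<partial>M)"
  proof (rule integral_dominated_convergence[where w="\<lambda>x. 3 * norm (f x)"])
    have "(\<lambda>i. f x - s i x) \<longlonglongrightarrow> f x - f x" if "x \<in> space M" for x
      using assms(3)[OF that] by (intro tendsto_diff tendsto_const)
    then show "AE x in M. (\<lambda>i. norm (f x - s i x)) \<longlonglongrightarrow> 0"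
      by (intro AE_I2 tendsto_norm_zero) simp
    show "AE x in M. norm (norm (f x - s i x)) \<le> 3 * norm (f x)" for i
    proof (rule AE_I2)
      fix x assume "x \<in> space M"
      then show "norm (norm (f x - s i x)) \<le> 3 * norm (f x)"
        using assms(4)[of x i] norm_triangle_ineq4[of "f x" "s i x"] by simp
    qed
  qed (use assms in \<open>auto intro: borel_measurable_integrable\<close>)
  then show ?thesis by simp
qed

locale L1_functional =
  fixes L :: "(real \<Rightarrow> complex) \<Rightarrow> complex" and C :: real
  assumes pos: "0 < C"
    and additive: "\<And>f g. integrable lborel f \<Longrightarrow> integrable lborel g \<Longrightarrow> L (\<lambda>x. f x + g x) = L f + L g"
    and homogeneous: "\<And>c f. integrable lborel f \<Longrightarrow> L (\<lambda>x. c * f x) = c * L f"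
    and bounded: "\<And>f. integrable lborel f \<Longrightarrow> norm (L f) \<le> C * (\<integral>x. norm (f x) \<partial>lborel)"
begin

lemma diff: "integrable lborel f \<Longrightarrow> integrable lborel g \<Longrightarrow> L (\<lambda>x. f x - g x) = L f - L g"
  using additive[of f "\<lambda>x. (-1) * g x"] homogeneous[of g "-1"] by simp

lemma zero: "L (\<lambda>x. 0) = 0"
  using homogeneous[of "\<lambda>x. 0" 0] by simp

lemma tendsto_of_L1_tendsto:
  assumes "\<And>i. integrable lborel (s i)" "integrable lborel f"
    and "(\<lambda>i. \<integral>x. norm (f x - s i x) \<partial>lborel) \<longlonglongrightarrow> 0"
  shows "(\<lambda>i. L (s i)) \<longlonglongrightarrow> L f"
proof -
  have "(\<lambda>i. L (s i) - L f) \<longlonglongrightarrow> 0"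
  proof (rule Lim_null_comparison)
    have "norm (L (s i) - L f) \<le> C * (\<integral>x. norm (f x - s i x) \<partial>lborel)" for i
      using diff[OF assms(2,1)] bounded[OF Bochner_Integration.integrable_diff[OF assms(2,1)]]
      by (simp add: norm_minus_commute)
    then show "\<forall>\<^sub>F i in sequentially. norm (L (s i) - L f) \<le> C * (\<integral>x. norm (f x - s i x) \<partial>lborel)"
      by simp
    show "(\<lambda>i. C * (\<integral>x. norm (f x - s i x) \<partial>lborel)) \<longlonglongrightarrow> 0"
      using tendsto_mult_right_zero[OF assms(3)] .
  qed
  then show ?thesis by (rule LIM_zero_cancel)
qed

lemma indicator_bounded:
  assumes "A \<in> sets lborel" "emeasure lborel A < \<infinity>"
  shows "norm (L (indicator A)) \<le> C * measure lborel A"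
proof -
  have "(\<lambda>x. norm (indicator A x :: complex)) = indicator A" by (auto simp: indicator_def)
  then show ?thesis using bounded[OF integrable_complex_indicator[OF assms]] assms by simp
qed

lemma indicator_sums:
  assumes A: "range A \<subseteq> sets lborel" "disjoint_family A" "emeasure lborel (\<Union>i. A i) < \<infinity>"
  shows "(\<lambda>i. L (indicator (A i))) sums L (indicator (\<Union>i. A i))"
proof -
  define U where "U = (\<Union>i. A i)"
  define B where "B n = (\<Union>i<n. A i)" for n
  have U: "U \<in> sets lborel" "emeasure lborel U < \<infinity>" using A unfolding U_def by auto
  have B: "B n \<in> sets lborel" "B n \<subseteq> U" for n using A unfolding B_def U_def by auto
  have finite_measure: "emeasure lborel X < \<infinity>" if "X \<subseteq> U" "X \<in> sets lborel" for X
    by (rule le_less_trans[OF emeasure_mono[OF that(1) U(1)] U(2)])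
  have partial_sums: "(\<Sum>i<n. L (indicator (A i))) = L (indicator (B n))" for n
  proof (induction n)
    case 0
    then show ?case using zero by (simp add: B_def)
  next
    case (Suc n)
    have "A n \<inter> B n = {}"
      using A(2) unfolding B_def disjoint_family_on_def by (auto dest: less_imp_neq)
    then have "indicator (B (Suc n)) = (\<lambda>x. indicator (B n) x + indicator (A n) x :: complex)"
      unfolding B_def lessThan_Suc UN_insert by (intro ext) (auto simp: indicator_def)
    moreover have "A n \<subseteq> U" "A n \<in> sets lborel" using A by (auto simp: U_def)
    ultimately show ?case
      using Suc additive[OF integrable_complex_indicator integrable_complex_indicator] B finite_measure
      by simp
  qed
  have "(\<lambda>n. L (indicator (B n))) \<longlonglongrightarrow> L (indicator U)"
  proof (rule tendsto_of_L1_tendsto)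
    have "incseq B" unfolding incseq_def B_def by force
    moreover have "(\<Union>n. B n) = U" unfolding B_def U_def by auto
    ultimately have "(\<lambda>n. measure lborel (B n)) \<longlonglongrightarrow> measure lborel U"
      using Lim_measure_incseq[of B lborel] B U by (auto simp: image_subset_iff less_top)
    moreover have "(\<integral>x. norm (indicator U x - indicator (B n) x :: complex) \<partial>lborel)
        = measure lborel U - measure lborel (B n)" for n
    proof -
      have "(\<lambda>x. norm (indicator U x - indicator (B n) x :: complex)) = indicator (U - B n)"
        using B(2)[of n] by (intro ext) (auto simp: indicator_def)
      then show ?thesis using B U measure_Diff[of lborel U "B n"] by (simp add: less_top)
    qed
    ultimately show "(\<lambda>n. \<integral>x. norm (indicator U x - indicator (B n) x :: complex) \<partial>lborel) \<longlonglongrightarrow> 0"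
      using tendsto_diff[OF tendsto_const, of "\<lambda>n. measure lborel (B n)" "measure lborel U" _ "measure lborel U"]
      by simp
  qed (use B U finite_measure in \<open>auto intro: integrable_complex_indicator\<close>)
  then show ?thesis unfolding sums_def partial_sums U_def .
qed

lemma indicator_density:
  obtains h where "h \<in> borel_measurable lborel" "AE x in lborel. norm (h x) \<le> 2 * C"
    "\<And>A. A \<in> sets lborel \<Longrightarrow> emeasure lborel A < \<infinity> \<Longrightarrow> L (indicator A) = (\<integral>x. h x * indicator A x \<partial>lborel)"
proof -
  note bnd = indicator_bounded
  obtain kr where kr[measurable]: "kr \<in> borel_measurable lborel" and kr_bnd: "AE x in lborel. \<bar>kr x\<bar> \<le> C"
    and kr_int: "\<And>A. A \<in> sets lborel \<Longrightarrow> emeasure lborel A < \<infinity> \<Longrightarrow>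
      set_integrable lborel A kr \<and> Re (L (indicator A)) = set_lebesgue_integral lborel A kr"
    using bounded_set_function_density[OF pos, of "\<lambda>A. Re (L (indicator A))"]
      bnd abs_Re_le_cmod order_trans sums_Re[OF indicator_sums] by blast
  obtain ki where ki[measurable]: "ki \<in> borel_measurable lborel" and ki_bnd: "AE x in lborel. \<bar>ki x\<bar> \<le> C"
    and ki_int: "\<And>A. A \<in> sets lborel \<Longrightarrow> emeasure lborel A < \<infinity> \<Longrightarrow>
      set_integrable lborel A ki \<and> Im (L (indicator A)) = set_lebesgue_integral lborel A ki"
    using bounded_set_function_density[OF pos, of "\<lambda>A. Im (L (indicator A))"]
      bnd abs_Im_le_cmod order_trans sums_Im[OF indicator_sums] by blast
  define h where "h x = complex_of_real (kr x) + \<i> * complex_of_real (ki x)" for x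
  have "h \<in> borel_measurable lborel" unfolding h_def by measurable
  moreover have "AE x in lborel. norm (h x) \<le> 2 * C"
    using kr_bnd ki_bnd
  proof eventually_elim
    case (elim x)
    then show ?case
      using norm_triangle_ineq[of "complex_of_real (kr x)" "\<i> * complex_of_real (ki x)"]
      by (simp add: h_def norm_mult)
  qed
  moreover have "L (indicator A) = (\<integral>x. h x * indicator A x \<partial>lborel)"
    if "A \<in> sets lborel" "emeasure lborel A < \<infinity>" for A
    using kr_int[OF that] ki_int[OF that]
    by (simp add: h_def integral_indicator_Re_Im complex_eq_iff)
  ultimately show ?thesis by (rule that)
qed

lemma representation:
  obtains h where "h \<in> borel_measurable lborel" "AE x in lborel. norm (h x) \<le> 2 * C"
    "\<And>f. integrable lborel f \<Longrightarrow> L f = (\<integral>x. h x * f x \<partial>lborel)"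
proof -
  obtain h where h[measurable]: "h \<in> borel_measurable lborel" and h_bnd: "AE x in lborel. norm (h x) \<le> 2 * C"
    and h_ind: "\<And>A. A \<in> sets lborel \<Longrightarrow> emeasure lborel A < \<infinity> \<Longrightarrow> L (indicator A) = (\<integral>x. h x * indicator A x \<partial>lborel)"
    using indicator_density by blast
  note h_int = integrable_mult_AE_bounded[OF h h_bnd]
  have "L f = (\<integral>x. h x * f x \<partial>lborel)" if "integrable lborel f" for f
    using that
  proof (induction rule: integrable_induct)
    case (base A c)
    have "(\<lambda>x. indicator A x *\<^sub>R c) = (\<lambda>x. c * indicator A x)"
      "(\<lambda>x. h x * (indicator A x *\<^sub>R c)) = (\<lambda>x. c * (h x * indicator A x))"
      by (auto simp: indicator_def)
    then show ?case
      using homogeneous[OF integrable_complex_indicator[OF base]] h_ind[OF base] by simp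
  next
    case (add f g)
    then show ?case by (simp add: additive distrib_left h_int Bochner_Integration.integral_add)
  next
    case (lim f s)
    have "(\<lambda>i. L (s i)) \<longlonglongrightarrow> L f"
      using lim by (intro tendsto_of_L1_tendsto L1_norm_diff_tendsto_zero) auto
    moreover have "(\<lambda>i. \<integral>x. h x * s i x \<partial>lborel) \<longlonglongrightarrow> (\<integral>x. h x * f x \<partial>lborel)"
    proof (rule integral_dominated_convergence[where w="\<lambda>x. 2 * C * (2 * norm (f x))"])
      show "AE x in lborel. norm (h x * s i x) \<le> 2 * C * (2 * norm (f x))" for i
      proof (rule eventually_mono[OF h_bnd])
        fix x assume "norm (h x) \<le> 2 * C"
        then show "norm (h x * s i x) \<le> 2 * C * (2 * norm (f x))"
          unfolding norm_mult using lim(3)[of x i] pos by (intro mult_mono) auto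
      qed
    qed (use lim in \<open>auto intro!: AE_I2 tendsto_mult borel_measurable_integrable\<close>)
    moreover have "(\<lambda>i. L (s i)) = (\<lambda>i. \<integral>x. h x * s i x \<partial>lborel)" using lim.IH by simp
    ultimately show ?case by (metis LIMSEQ_unique)
  qed
  with h h_bnd show ?thesis by (rule that)
qed

end

section \<open>Weak-star limits in L-infinity of the half-line\<close>

lemma norm_integral_mult_le:
  fixes h \<psi> :: "'a \<Rightarrow> complex"
  assumes "h \<in> borel_measurable M" "AE x in M. norm (h x) \<le> B" "integrable M \<psi>"
  shows "norm (\<integral>x. h x * \<psi> x \<partial>M) \<le> B * (\<integral>x. norm (\<psi> x) \<partial>M)"
proof -
  have "norm (\<integral>x. h x * \<psi> x \<partial>M) \<le> (\<integral>x. norm (h x * \<psi> x) \<partial>M)"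
    by (rule integral_norm_bound)
  also have "\<dots> \<le> (\<integral>x. B * norm (\<psi> x) \<partial>M)"
  proof (rule integral_mono_AE)
    show "integrable M (\<lambda>x. norm (h x * \<psi> x))"
      using integrable_mult_AE_bounded[OF assms] by (rule integrable_norm)
    show "AE x in M. norm (h x * \<psi> x) \<le> B * norm (\<psi> x)"
      using assms(2) by (rule eventually_mono) (auto simp: norm_mult intro: mult_right_mono)
  qed (use assms(3) in simp)
  finally show ?thesis by simp
qed

lemma ultrafilter_limit_tendsto:
  fixes G :: "'a \<Rightarrow> real \<Rightarrow> complex"
  assumes F: "is_ultrafilter F" and G[measurable]: "\<And>s. G s \<in> borel_measurable lborel"
    and bnd: "eventually (\<lambda>s. AE x in lborel. norm (G s x) \<le> B) F" and \<psi>: "integrable lborel \<psi>"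
  shows "((\<lambda>s. \<integral>x. G s x * \<psi> x \<partial>lborel) \<longlongrightarrow> Lim F (\<lambda>s. \<integral>x. G s x * \<psi> x \<partial>lborel)) F"
    and "norm (Lim F (\<lambda>s. \<integral>x. G s x * \<psi> x \<partial>lborel)) \<le> B * (\<integral>x. norm (\<psi> x) \<partial>lborel)"
proof -
  have bounded: "eventually (\<lambda>s. norm (\<integral>x. G s x * \<psi> x \<partial>lborel) \<le> B * (\<integral>x. norm (\<psi> x) \<partial>lborel)) F"
    using bnd by (rule eventually_mono) (use \<psi> in \<open>auto intro: norm_integral_mult_le\<close>)
  show lim: "((\<lambda>s. \<integral>x. G s x * \<psi> x \<partial>lborel) \<longlongrightarrow> Lim F (\<lambda>s. \<integral>x. G s x * \<psi> x \<partial>lborel)) F"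
    using F bounded by (rule is_ultrafilter_tendsto_Lim)
  have "F \<noteq> bot" using F by (simp add: is_ultrafilter_def)
  then show "norm (Lim F (\<lambda>s. \<integral>x. G s x * \<psi> x \<partial>lborel)) \<le> B * (\<integral>x. norm (\<psi> x) \<partial>lborel)"
    by (rule tendsto_upperbound[OF tendsto_norm[OF lim] bounded])
qed

lemma L1_functional_ultrafilter_limit:
  fixes G :: "'a \<Rightarrow> real \<Rightarrow> complex"
  assumes F: "is_ultrafilter F" and G[measurable]: "\<And>s. G s \<in> borel_measurable lborel"
    and B: "0 < B" and bnd: "eventually (\<lambda>s. AE x in lborel. norm (G s x) \<le> B) F"
  shows "L1_functional (\<lambda>\<psi>. Lim F (\<lambda>s. \<integral>x. G s x * \<psi> x \<partial>lborel)) B"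
proof
  define T where "T \<psi> = (\<lambda>s. \<integral>x. G s x * \<psi> x \<partial>lborel)" for \<psi>
  note lim = ultrafilter_limit_tendsto(1)[OF F G bnd, folded T_def]
  have F_nonbot: "F \<noteq> bot" using F by (simp add: is_ultrafilter_def)
  fix f g :: "real \<Rightarrow> complex" and c :: complex
  assume f: "integrable lborel f"
  show "norm (Lim F (T f)) \<le> B * (\<integral>x. norm (f x) \<partial>lborel)"
    unfolding T_def by (rule ultrafilter_limit_tendsto(2)[OF F G bnd f])
  have "T (\<lambda>x. c * f x) = (\<lambda>s. c * T f s)"
    by (intro ext) (simp add: T_def mult.left_commute)
  then have "(T (\<lambda>x. c * f x) \<longlongrightarrow> c * Lim F (T f)) F"
    using lim[OF f] by (simp add: tendsto_mult_left)
  then show "Lim F (T (\<lambda>x. c * f x)) = c * Lim F (T f)"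
    by (rule tendsto_Lim[OF F_nonbot])
  assume g: "integrable lborel g"
  have "eventually (\<lambda>s. T f s + T g s = T (\<lambda>x. f x + g x) s) F"
    using bnd by (rule eventually_mono)
      (use f g in \<open>simp add: T_def distrib_left Bochner_Integration.integral_add integrable_mult_AE_bounded\<close>)
  then have "(T (\<lambda>x. f x + g x) \<longlongrightarrow> Lim F (T f) + Lim F (T g)) F"
    using tendsto_add[OF lim[OF f] lim[OF g]] by (rule Lim_transform_eventually[rotated])
  then show "Lim F (T (\<lambda>x. f x + g x)) = Lim F (T f) + Lim F (T g)"
    by (rule tendsto_Lim[OF F_nonbot])
qed (fact B)

lemma ultrafilter_weak_star_convergent:
  fixes G :: "'a \<Rightarrow> real \<Rightarrow> complex"
  assumes F: "is_ultrafilter F" and G[measurable]: "\<And>s. G s \<in> borel_measurable lborel"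
    and B: "0 < B" and bnd: "eventually (\<lambda>s. AE x in lborel. norm (G s x) \<le> B) F"
  obtains h where "h \<in> borel_measurable lborel" "AE x in lborel. norm (h x) \<le> 2 * B"
    "\<And>\<psi>. integrable lborel \<psi> \<Longrightarrow> ((\<lambda>s. \<integral>x. G s x * \<psi> x \<partial>lborel) \<longlongrightarrow> (\<integral>x. h x * \<psi> x \<partial>lborel)) F"
proof -
  interpret L1_functional "\<lambda>\<psi>. Lim F (\<lambda>s. \<integral>x. G s x * \<psi> x \<partial>lborel)" B
    by (rule L1_functional_ultrafilter_limit[OF F G B bnd])
  obtain h where "h \<in> borel_measurable lborel" "AE x in lborel. norm (h x) \<le> 2 * B"
    "\<And>\<psi>. integrable lborel \<psi> \<Longrightarrow> Lim F (\<lambda>s. \<integral>x. G s x * \<psi> x \<partial>lborel) = (\<integral>x. h x * \<psi> x \<partial>lborel)"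
    using representation by blast
  with ultrafilter_limit_tendsto(1)[OF F G bnd] show ?thesis by (intro that) auto
qed

definition is_wstar_lim :: "real filter \<Rightarrow> (real \<Rightarrow> real \<Rightarrow> complex) \<Rightarrow> (real \<Rightarrow> complex) \<Rightarrow> bool" where
  "is_wstar_lim F G h \<longleftrightarrow> h \<in> Linf_on {0..} \<and>
     (\<forall>\<psi>. set_integrable lborel {0..} \<psi> \<longrightarrow>
        ((\<lambda>s. set_lebesgue_integral lborel {0..} (\<lambda>x. G s x * \<psi> x))
           \<longlongrightarrow> set_lebesgue_integral lborel {0..} (\<lambda>x. h x * \<psi> x)) F)"

lemma is_wstar_lim_wstar_lim: "is_wstar_lim F G h \<Longrightarrow> is_wstar_lim F G (wstar_lim F G)"
proof -
  have "wstar_lim F G = (SOME h. is_wstar_lim F G h)" unfolding wstar_lim_def is_wstar_lim_def ..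
  then show "is_wstar_lim F G h \<Longrightarrow> is_wstar_lim F G (wstar_lim F G)" by (simp add: someI)
qed

lemma Linf_onD:
  assumes "h \<in> Linf_on S"
  shows "h \<in> borel_measurable lborel" "\<exists>C. AE x in lborel. x \<in> S \<longrightarrow> norm (h x) \<le> C"
  using assms by (auto simp: Linf_on_def)

lemma AE_eq_on_of_integrals_eq:
  fixes h1 h2 :: "'a \<Rightarrow> complex"
  assumes [measurable]: "h1 \<in> borel_measurable M" "h2 \<in> borel_measurable M"
    and A: "A \<in> sets M" "emeasure M A < \<infinity>"
    and Bh: "AE x in M. x \<in> A \<longrightarrow> norm (h1 x) \<le> Bh" and Bg: "AE x in M. x \<in> A \<longrightarrow> norm (h2 x) \<le> Bg"
    and eq: "\<And>\<psi>. integrable M (\<lambda>x. indicator A x *\<^sub>R \<psi> x) \<Longrightarrow>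
      (\<integral>x. indicator A x *\<^sub>R (h1 x * \<psi> x) \<partial>M) = (\<integral>x. indicator A x *\<^sub>R (h2 x * \<psi> x) \<partial>M)"
  shows "AE x in M. x \<in> A \<longrightarrow> h1 x = h2 x"
proof -
  define d where "d x = h1 x - h2 x" for x
  have [measurable]: "d \<in> borel_measurable M" unfolding d_def by measurable
  then have [measurable]: "(\<lambda>x. cnj (d x)) \<in> borel_measurable M"
    by (intro borel_measurable_continuous_on[where f=cnj] continuous_intros)
  have d_bnd: "AE x in M. x \<in> A \<longrightarrow> norm (d x) \<le> Bh + Bg"
    using Bh Bg
  proof eventually_elim
    case (elim x)
    then show ?case using norm_triangle_ineq4[of "h1 x" "h2 x"] by (auto simp: d_def)
  qed
  have int: "integrable M (\<lambda>x. indicator A x *\<^sub>R (h x * cnj (d x)))"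
    if [measurable]: "h \<in> borel_measurable M" and "AE x in M. x \<in> A \<longrightarrow> norm (h x) \<le> b" for h b
  proof (rule integrable_indicator_AE_bounded[OF _ A, where B="b * (Bh + Bg)"])
    show "AE x in M. x \<in> A \<longrightarrow> norm (h x * cnj (d x)) \<le> b * (Bh + Bg)"
      using that(2) d_bnd
      by eventually_elim (auto simp: norm_mult intro!: mult_mono intro: order_trans[OF norm_ge_zero])
  qed simp
  have "(\<integral>x. indicator A x *\<^sub>R (h1 x * cnj (d x)) - indicator A x *\<^sub>R (h2 x * cnj (d x)) \<partial>M) = 0"
    using eq[OF int[where h="\<lambda>_. 1" and b=1]] int[OF _ Bh] int[OF _ Bg] by simp
  moreover have "indicator A x *\<^sub>R (h1 x * cnj (d x)) - indicator A x *\<^sub>R (h2 x * cnj (d x))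
      = complex_of_real (indicator A x * (norm (d x))\<^sup>2)" for x
  proof -
    have "h1 x * cnj (d x) - h2 x * cnj (d x) = complex_of_real ((norm (d x))\<^sup>2)"
      using complex_norm_square[of "d x"] by (simp add: d_def left_diff_distrib)
    then show ?thesis by (cases "x \<in> A") (simp_all add: scaleR_diff_right[symmetric])
  qed
  ultimately have "(\<integral>x. indicator A x * (norm (d x))\<^sup>2 \<partial>M) = 0"
    by (simp del: of_real_mult)
  moreover have "integrable M (\<lambda>x. indicator A x *\<^sub>R (norm (d x))\<^sup>2)"
    using d_bnd by (intro integrable_indicator_AE_bounded[OF _ A, where B="(Bh + Bg)\<^sup>2"])
      (auto elim!: eventually_mono intro!: power_mono)
  ultimately have "AE x in M. indicator A x * (norm (d x))\<^sup>2 = 0"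
    by (subst integral_nonneg_eq_0_iff_AE[symmetric]) auto
  then show ?thesis by (rule eventually_mono) (auto simp: d_def indicator_def)
qed

lemma Linf_on_AE_eq:
  fixes h1 h2 :: "real \<Rightarrow> complex"
  assumes h1: "h1 \<in> Linf_on {0..}" and h2: "h2 \<in> Linf_on {0..}"
    and eq: "\<And>\<psi>. set_integrable lborel {0..} \<psi> \<Longrightarrow>
      set_lebesgue_integral lborel {0..} (\<lambda>x. h1 x * \<psi> x) = set_lebesgue_integral lborel {0..} (\<lambda>x. h2 x * \<psi> x)"
  shows "AE x in lborel. 0 \<le> x \<longrightarrow> h1 x = h2 x"
proof -
  have [measurable]: "h1 \<in> borel_measurable lborel" "h2 \<in> borel_measurable lborel"
    using h1 h2 by (auto dest: Linf_onD)
  obtain B1 B2 where B1: "AE x in lborel. x \<in> {0..} \<longrightarrow> norm (h1 x) \<le> B1"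
    and B2: "AE x in lborel. x \<in> {0..} \<longrightarrow> norm (h2 x) \<le> B2"
    using Linf_onD(2)[OF h1] Linf_onD(2)[OF h2] by blast
  have "AE x in lborel. x \<in> {0..real n} \<longrightarrow> h1 x = h2 x" for n :: nat
  proof (rule AE_eq_on_of_integrals_eq[where Bh=B1 and Bg=B2])
    fix \<psi> :: "real \<Rightarrow> complex" assume \<psi>: "integrable lborel (\<lambda>x. indicator {0..real n} x *\<^sub>R \<psi> x)"
    have restrict: "(\<lambda>x. indicator {0..} x *\<^sub>R (q x * (indicator {0..real n} x *\<^sub>R \<psi> x)))
        = (\<lambda>x. indicator {0..real n} x *\<^sub>R (q x * \<psi> x))" for q :: "real \<Rightarrow> complex"
      by (auto simp: indicator_def)
    have "(\<lambda>x. indicator {0..} x *\<^sub>R (indicator {0..real n} x *\<^sub>R \<psi> x)) = (\<lambda>x. indicator {0..real n} x *\<^sub>R \<psi> x)"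
      by (auto simp: indicator_def)
    with \<psi> have "set_integrable lborel {0..} (\<lambda>x. indicator {0..real n} x *\<^sub>R \<psi> x)"
      unfolding set_integrable_def by simp
    from eq[OF this] show "(\<integral>x. indicator {0..real n} x *\<^sub>R (h1 x * \<psi> x) \<partial>lborel)
        = (\<integral>x. indicator {0..real n} x *\<^sub>R (h2 x * \<psi> x) \<partial>lborel)"
      unfolding set_lebesgue_integral_def restrict .
  next
    show "AE x in lborel. x \<in> {0..real n} \<longrightarrow> norm (h1 x) \<le> B1" using B1 by (rule eventually_mono) auto
    show "AE x in lborel. x \<in> {0..real n} \<longrightarrow> norm (h2 x) \<le> B2" using B2 by (rule eventually_mono) auto
  qed auto
  then have "AE x in lborel. \<forall>n::nat. x \<in> {0..real n} \<longrightarrow> h1 x = h2 x" by (subst AE_all_countable) blast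
  then show ?thesis
    by (rule eventually_mono) (use real_nat_ceiling_ge in \<open>fastforce\<close>)
qed

lemma is_wstar_lim_unique:
  assumes "is_wstar_lim F G h1" "is_wstar_lim F G h2" "F \<noteq> bot"
  shows "AE x in lborel. 0 \<le> x \<longrightarrow> h1 x = h2 x"
  using assms unfolding is_wstar_lim_def by (intro Linf_on_AE_eq) (auto intro: tendsto_unique)

lemma is_wstar_lim_shifts_exists:
  fixes g :: "real \<Rightarrow> complex"
  assumes F: "is_ultrafilter F" and F_nonneg: "eventually (\<lambda>s. 0 \<le> s) F" and g: "g \<in> Linf_on {0..}"
  shows "\<exists>h. is_wstar_lim F (\<lambda>s x. g (x + s)) h"
proof -
  have [measurable]: "g \<in> borel_measurable lborel" using g by (rule Linf_onD)
  obtain B0 where B0: "AE x in lborel. x \<in> {0..} \<longrightarrow> norm (g x) \<le> B0" using Linf_onD(2)[OF g] by blast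
  define B where "B = max B0 0 + 1"
  have B: "0 < B" unfolding B_def by simp
  define G where "G s x = indicator {0..} x *\<^sub>R g (x + s)" for s x :: real
  have G_meas[measurable]: "\<And>s. G s \<in> borel_measurable lborel" unfolding G_def by measurable
  have "eventually (\<lambda>s. AE x in lborel. norm (G s x) \<le> B) F"
    using F_nonneg
  proof (rule eventually_mono)
    fix s :: real assume "0 \<le> s"
    show "AE x in lborel. norm (G s x) \<le> B"
      using AE_lborel_shift[OF B0, of s] by (rule eventually_mono) (use \<open>0 \<le> s\<close> in \<open>auto simp: G_def B_def indicator_def\<close>)
  qed
  then obtain h where h[measurable]: "h \<in> borel_measurable lborel" and h_bnd: "AE x in lborel. norm (h x) \<le> 2 * B"
    and h_lim: "\<And>\<psi>. integrable lborel \<psi> \<Longrightarrow> ((\<lambda>s. \<integral>x. G s x * \<psi> x \<partial>lborel) \<longlongrightarrow> (\<integral>x. h x * \<psi> x \<partial>lborel)) F"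
    using ultrafilter_weak_star_convergent[where G=G, OF F G_meas B] by blast
  have "is_wstar_lim F (\<lambda>s x. g (x + s)) h"
    unfolding is_wstar_lim_def
  proof (intro conjI allI impI)
    show "h \<in> Linf_on {0..}" using h_bnd unfolding Linf_on_def by (auto elim!: eventually_mono)
    fix \<psi> :: "real \<Rightarrow> complex" assume "set_integrable lborel {0..} \<psi>"
    then have "((\<lambda>s. \<integral>x. G s x * (indicator {0..} x *\<^sub>R \<psi> x) \<partial>lborel)
        \<longlongrightarrow> (\<integral>x. h x * (indicator {0..} x *\<^sub>R \<psi> x) \<partial>lborel)) F"
      unfolding set_integrable_def by (rule h_lim)
    moreover have "(\<lambda>x. G s x * (indicator {0..} x *\<^sub>R \<psi> x)) = (\<lambda>x. indicator {0..} x *\<^sub>R (g (x + s) * \<psi> x))" for s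
      by (auto simp: G_def indicator_def)
    moreover have "(\<lambda>x. h x * (indicator {0..} x *\<^sub>R \<psi> x)) = (\<lambda>x. indicator {0..} x *\<^sub>R (h x * \<psi> x))"
      by (auto simp: indicator_def)
    ultimately show "((\<lambda>s. set_lebesgue_integral lborel {0..} (\<lambda>x. g (x + s) * \<psi> x))
        \<longlongrightarrow> set_lebesgue_integral lborel {0..} (\<lambda>x. h x * \<psi> x)) F"
      by (simp add: set_lebesgue_integral_def)
  qed
  then show ?thesis by blast
qed

lemma g_omega_pos_is_wstar_lim:
  assumes "\<eta> \<in> Nstar" "0 \<le> u" "g \<in> Linf_on {0..}"
  shows "is_wstar_lim (omega_filter \<eta> u) (\<lambda>s x. g (x + s)) (g_omega_pos g \<eta> u)"
  unfolding g_omega_pos_def using assms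
  by (metis is_wstar_lim_shifts_exists is_wstar_lim_wstar_lim omega_filter_is_ultrafilter omega_filter_nonneg)

lemma g_omega_pos_Linf_on:
  "\<eta> \<in> Nstar \<Longrightarrow> 0 \<le> u \<Longrightarrow> g \<in> Linf_on {0..} \<Longrightarrow> g_omega_pos g \<eta> u \<in> Linf_on {0..}"
  using g_omega_pos_is_wstar_lim by (auto simp: is_wstar_lim_def)

lemma set_integral_shift_nonneg:
  fixes q \<psi> :: "real \<Rightarrow> complex"
  assumes "0 \<le> a"
  shows "set_lebesgue_integral lborel {0..} (\<lambda>z. q z * (indicator {a..} z *\<^sub>R \<psi> (z - a)))
       = set_lebesgue_integral lborel {0..} (\<lambda>x. q (a + x) * \<psi> x)"
  unfolding set_lebesgue_integral_def using assms
  by (subst integral_shift[symmetric, of _ a]) (auto intro!: Bochner_Integration.integral_cong simp: indicator_def add.commute)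

lemma is_wstar_lim_shift:
  fixes g h :: "real \<Rightarrow> complex"
  assumes lim: "is_wstar_lim F (\<lambda>s x. g (x + s)) h" and a: "0 \<le> a"
  shows "is_wstar_lim (filtermap (\<lambda>s. a + s) F) (\<lambda>s x. g (x + s)) (\<lambda>x. h (a + x))"
  unfolding is_wstar_lim_def
proof (intro conjI allI impI)
  have h: "h \<in> Linf_on {0..}" using lim by (simp add: is_wstar_lim_def)
  then obtain C where C: "AE x in lborel. x \<in> {0..} \<longrightarrow> norm (h x) \<le> C" by (blast dest: Linf_onD)
  have [measurable]: "h \<in> borel_measurable lborel" using h by (rule Linf_onD)
  show "(\<lambda>x. h (a + x)) \<in> Linf_on {0..}"
    unfolding Linf_on_def using AE_lborel_shift[OF C, of a] a
    by (auto elim!: eventually_mono simp: add.commute)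
  fix \<psi> :: "real \<Rightarrow> complex" assume \<psi>: "set_integrable lborel {0..} \<psi>"
  define \<psi>' where "\<psi>' z = indicator {a..} z *\<^sub>R \<psi> (z - a)" for z
  have "(\<lambda>z. indicator {0..} (z + - a) *\<^sub>R \<psi> (z + - a)) = (\<lambda>z. indicator {0..} z *\<^sub>R \<psi>' z)"
    using a by (auto simp: \<psi>'_def indicator_def)
  then have "set_integrable lborel {0..} \<psi>'"
    using integrable_shift[OF \<psi>[unfolded set_integrable_def], of "- a"] by (simp add: set_integrable_def)
  then have "((\<lambda>s. set_lebesgue_integral lborel {0..} (\<lambda>x. g (x + s) * \<psi>' x))
      \<longlongrightarrow> set_lebesgue_integral lborel {0..} (\<lambda>x. h x * \<psi>' x)) F"
    using lim by (simp add: is_wstar_lim_def)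
  moreover have "set_lebesgue_integral lborel {0..} (\<lambda>x. q x * \<psi>' x)
      = set_lebesgue_integral lborel {0..} (\<lambda>x. q (a + x) * \<psi> x)" for q
    unfolding \<psi>'_def by (rule set_integral_shift_nonneg[OF a])
  ultimately show "((\<lambda>s. set_lebesgue_integral lborel {0..} (\<lambda>x. g (x + s) * \<psi> x))
      \<longlongrightarrow> set_lebesgue_integral lborel {0..} (\<lambda>x. h (a + x) * \<psi> x)) (filtermap (\<lambda>s. a + s) F)"
    unfolding filterlim_filtermap by (simp only:) (simp add: ac_simps)
qed

lemma g_omega_pos_tau_pow:
  assumes "\<eta> \<in> Nstar" "0 \<le> u" "g \<in> Linf_on {0..}"
  shows "AE x in lborel. 0 \<le> x \<longrightarrow> g_omega_pos g \<eta> u (real k + x) = g_omega_pos g ((tau ^^ k) \<eta>) u x"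
proof -
  let ?F = "omega_filter ((tau ^^ k) \<eta>) u"
  have shifted: "is_wstar_lim ?F (\<lambda>s x. g (x + s)) (\<lambda>x. g_omega_pos g \<eta> u (real k + x))"
    unfolding omega_filter_tau_pow by (rule is_wstar_lim_shift[OF g_omega_pos_is_wstar_lim[OF assms]]) simp
  then have "is_wstar_lim ?F (\<lambda>s x. g (x + s)) (g_omega_pos g ((tau ^^ k) \<eta>) u)"
    unfolding g_omega_pos_def by (rule is_wstar_lim_wstar_lim)
  moreover have "?F \<noteq> bot"
    using omega_filter_is_ultrafilter[OF assms(1)]
    by (simp add: omega_filter_tau_pow is_ultrafilter_def filtermap_bot_iff)
  ultimately show ?thesis by (rule is_wstar_lim_unique[OF shifted])
qed

lemma g_omega_eq:
  assumes "\<eta> \<in> Nstar"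
  shows "g_omega g \<eta> u x = g_omega_pos g (tau_inv (nat \<lceil>- x\<rceil>) \<eta>) u (real (nat \<lceil>- x\<rceil>) + x)"
proof (cases "0 \<le> x")
  case True
  then have "nat \<lceil>- x\<rceil> = 0" by linarith
  with True show ?thesis by (simp add: g_omega_def tau_inv_0[OF assms])
qed (simp add: g_omega_def)

lemma g_omega_pos_measurable:
  "\<eta> \<in> Nstar \<Longrightarrow> 0 \<le> u \<Longrightarrow> g \<in> Linf_on {0..} \<Longrightarrow> g_omega_pos g \<eta> u \<in> borel_measurable lborel"
  using g_omega_pos_Linf_on by (blast dest: Linf_onD)

lemma g_omega_measurable:
  assumes \<eta>: "\<eta> \<in> Nstar" and u: "0 \<le> u" and g: "g \<in> Linf_on {0..}"
  shows "g_omega g \<eta> u \<in> borel_measurable lborel"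
proof -
  have "(\<lambda>x. g_omega_pos g (tau_inv n \<eta>) u (real n + x)) \<in> borel_measurable lborel" for n
    using g_omega_pos_measurable[OF tau_inv_Nstar[OF \<eta>] u g, of n] by measurable
  moreover have "(\<lambda>x::real. nat \<lceil>- x\<rceil>) \<in> measurable lborel (count_space UNIV)" by measurable
  ultimately have "(\<lambda>x. g_omega_pos g (tau_inv (nat \<lceil>- x\<rceil>) \<eta>) u (real (nat \<lceil>- x\<rceil>) + x)) \<in> borel_measurable lborel"
    by (rule measurable_compose_countable'[where f="\<lambda>n x. g_omega_pos g (tau_inv n \<eta>) u (real n + x)"]) auto
  then show ?thesis by (simp add: g_omega_eq[OF \<eta>, abs_def])
qed

lemma g_omega_tau_inv:
  assumes \<eta>: "\<eta> \<in> Nstar" and u: "0 \<le> u" and g: "g \<in> Linf_on {0..}"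
  shows "AE z in lborel. - real N \<le> z \<longrightarrow> g_omega g (tau_inv N \<eta>) u (real N + z) = g_omega g \<eta> u z"
proof -
  have "AE z in lborel. M \<le> N \<longrightarrow> 0 \<le> z + real M \<longrightarrow>
      g_omega_pos g (tau_inv N \<eta>) u (real N + z) = g_omega_pos g (tau_inv M \<eta>) u (z + real M)" for M
  proof (cases "M \<le> N")
    case True
    show ?thesis
      using AE_lborel_shift[OF g_omega_pos_tau_pow[OF tau_inv_Nstar[OF \<eta>, of N] u g, where k="N - M"], of "real M"]
      by (simp add: tau_pow_tau_inv[OF \<eta> True] of_nat_diff True)
  qed simp
  then have "AE z in lborel. \<forall>M. M \<le> N \<longrightarrow> 0 \<le> z + real M \<longrightarrow>
      g_omega_pos g (tau_inv N \<eta>) u (real N + z) = g_omega_pos g (tau_inv M \<eta>) u (z + real M)"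
    by (subst AE_all_countable) blast
  then show ?thesis
  proof (rule eventually_mono, intro impI)
    fix z assume shifts: "\<forall>M. M \<le> N \<longrightarrow> 0 \<le> z + real M \<longrightarrow>
      g_omega_pos g (tau_inv N \<eta>) u (real N + z) = g_omega_pos g (tau_inv M \<eta>) u (z + real M)"
      and z: "- real N \<le> z"
    define M where "M = nat \<lceil>- z\<rceil>"
    have M: "M \<le> N" "0 \<le> z + real M" unfolding M_def using z by linarith+
    have "g_omega g (tau_inv N \<eta>) u (real N + z) = g_omega_pos g (tau_inv N \<eta>) u (real N + z)"
      using z by (simp add: g_omega_def)
    also have "\<dots> = g_omega_pos g (tau_inv M \<eta>) u (z + real M)" using shifts M by blast
    also have "\<dots> = g_omega g \<eta> u z" by (simp add: g_omega_eq[OF \<eta>] M_def add.commute)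
    finally show "g_omega g (tau_inv N \<eta>) u (real N + z) = g_omega g \<eta> u z" .
  qed
qed

section \<open>Correlation with an integrable kernel\<close>

lemma integrable_correlation_product:
  fixes g \<phi> \<psi> :: "real \<Rightarrow> complex"
  assumes [measurable]: "g \<in> borel_measurable lborel" and g_bnd: "\<And>y. norm (g y) \<le> C"
    and \<phi>: "integrable lborel \<phi>" and \<psi>: "integrable lborel \<psi>"
  shows "integrable (lborel \<Otimes>\<^sub>M lborel) (\<lambda>(x, y). \<psi> x * (g y * \<phi> (y - x)))"
proof (rule lborel_pair.Fubini_integrable)
  have [measurable]: "\<phi> \<in> borel_measurable lborel" "\<psi> \<in> borel_measurable lborel"
    using \<phi> \<psi> by (auto intro: borel_measurable_integrable)
  show "(\<lambda>(x, y). \<psi> x * (g y * \<phi> (y - x))) \<in> borel_measurable (lborel \<Otimes>\<^sub>M lborel)" by measurable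
  have \<phi>_shift: "integrable lborel (\<lambda>y. \<phi> (y - x))" for x
    using integrable_shift[OF \<phi>, of "- x"] by simp
  have inner: "integrable lborel (\<lambda>y. \<psi> x * (g y * \<phi> (y - x)))" for x
    using integrable_mult_AE_bounded[OF _ AE_I2[OF g_bnd] \<phi>_shift] by simp
  then show "AE x in lborel. integrable lborel (\<lambda>y. case (x, y) of (x, y) \<Rightarrow> \<psi> x * (g y * \<phi> (y - x)))"
    by simp
  have norm_bound: "(\<integral>y. norm (\<psi> x * (g y * \<phi> (y - x))) \<partial>lborel) \<le> norm (\<psi> x) * C * (\<integral>y. norm (\<phi> y) \<partial>lborel)" for x
  proof -
    have "(\<integral>y. norm (\<psi> x * (g y * \<phi> (y - x))) \<partial>lborel) \<le> (\<integral>y. norm (\<psi> x) * C * norm (\<phi> (y - x)) \<partial>lborel)"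
    proof (rule integral_mono)
      show "integrable lborel (\<lambda>y. norm (\<psi> x * (g y * \<phi> (y - x))))" using inner by (rule integrable_norm)
      show "integrable lborel (\<lambda>y. norm (\<psi> x) * C * norm (\<phi> (y - x)))" using \<phi>_shift by simp
      show "norm (\<psi> x * (g y * \<phi> (y - x))) \<le> norm (\<psi> x) * C * norm (\<phi> (y - x))" for y
      proof -
        have "norm (g y) * norm (\<phi> (y - x)) \<le> C * norm (\<phi> (y - x))"
          using g_bnd[of y] by (rule mult_right_mono) simp
        then show ?thesis by (simp add: norm_mult mult.assoc mult_left_mono)
      qed
    qed
    also have "\<dots> = norm (\<psi> x) * C * (\<integral>y. norm (\<phi> y) \<partial>lborel)"
      using integral_shift[of "\<lambda>y. norm (\<phi> y)" "- x"] by simp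
    finally show ?thesis .
  qed
  have "integrable lborel (\<lambda>x. \<integral>y. norm (\<psi> x * (g y * \<phi> (y - x))) \<partial>lborel)"
  proof (rule Bochner_Integration.integrable_bound)
    show "integrable lborel (\<lambda>x. norm (\<psi> x) * C * (\<integral>y. norm (\<phi> y) \<partial>lborel))" using \<psi> by simp
    have "norm (\<integral>y. norm (\<psi> x * (g y * \<phi> (y - x))) \<partial>lborel) \<le> norm (norm (\<psi> x) * C * (\<integral>y. norm (\<phi> y) \<partial>lborel))" for x
    proof -
      have "0 \<le> (\<integral>y. norm (\<psi> x * (g y * \<phi> (y - x))) \<partial>lborel)" by (rule integral_nonneg_AE) simp
      then show ?thesis using norm_bound[of x] by simp
    qed
    then show "AE x in lborel. norm (\<integral>y. norm (\<psi> x * (g y * \<phi> (y - x))) \<partial>lborel)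
        \<le> norm (norm (\<psi> x) * C * (\<integral>y. norm (\<phi> y) \<partial>lborel))" by simp
  qed measurable
  then show "integrable lborel (\<lambda>x. \<integral>y. norm (case (x, y) of (x, y) \<Rightarrow> \<psi> x * (g y * \<phi> (y - x))) \<partial>lborel)"
    by simp
qed

lemma integral_correlation_swap:
  fixes g \<phi> \<psi> :: "real \<Rightarrow> complex"
  assumes [measurable]: "g \<in> borel_measurable lborel" and g_bnd: "\<And>y. norm (g y) \<le> C"
    and \<phi>: "integrable lborel \<phi>" and \<psi>: "integrable lborel \<psi>"
  shows "(\<integral>x. \<psi> x * (\<integral>t. g (x + t) * \<phi> t \<partial>lborel) \<partial>lborel)
       = (\<integral>y. g y * (\<integral>x. \<psi> x * \<phi> (y - x) \<partial>lborel) \<partial>lborel)"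
proof -
  have "(\<integral>t. g (x + t) * \<phi> t \<partial>lborel) = (\<integral>y. g y * \<phi> (y - x) \<partial>lborel)" for x
    using integral_shift[of "\<lambda>t. g (x + t) * \<phi> t" "- x"] by simp
  then have "(\<integral>x. \<psi> x * (\<integral>t. g (x + t) * \<phi> t \<partial>lborel) \<partial>lborel)
      = (\<integral>x. (\<integral>y. \<psi> x * (g y * \<phi> (y - x)) \<partial>lborel) \<partial>lborel)"
    by simp
  also have "\<dots> = (\<integral>y. (\<integral>x. \<psi> x * (g y * \<phi> (y - x)) \<partial>lborel) \<partial>lborel)"
    using integrable_correlation_product[OF _ g_bnd \<phi> \<psi>] by (intro lborel_pair.Fubini_integral[symmetric]) simp
  also have "\<dots> = (\<integral>y. g y * (\<integral>x. \<psi> x * \<phi> (y - x) \<partial>lborel) \<partial>lborel)"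
    by (simp only: mult.left_commute[of "\<psi> _"] Bochner_Integration.integral_mult_right_zero)
  finally show ?thesis .
qed

lemma integrable_convolution:
  fixes \<phi> \<psi> :: "real \<Rightarrow> complex"
  assumes \<phi>: "integrable lborel \<phi>" and \<psi>: "integrable lborel \<psi>"
  shows "integrable lborel (\<lambda>y. \<integral>x. \<psi> x * \<phi> (y - x) \<partial>lborel)"
  using lborel_pair.integrable_snd[OF integrable_correlation_product[where g="\<lambda>_. 1" and C=1, OF _ _ \<phi> \<psi>]]
  by simp

lemma convolution_eq_0_of_neg:
  fixes \<phi> \<psi> :: "real \<Rightarrow> complex"
  assumes "\<And>t. t < 0 \<Longrightarrow> \<phi> t = 0" "\<And>x. x < 0 \<Longrightarrow> \<psi> x = 0" "y < 0"
  shows "(\<integral>x. \<psi> x * \<phi> (y - x) \<partial>lborel) = 0"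
proof -
  have "\<psi> x * \<phi> (y - x) = 0" for x
    using assms(1)[of "y - x"] assms(2)[of x] assms(3) by (cases "x < 0") auto
  then have "(\<lambda>x. \<psi> x * \<phi> (y - x)) = (\<lambda>x. 0)" by (rule ext)
  then show ?thesis by simp
qed

lemma integral_correlation_swap_nonneg:
  fixes g \<phi> \<psi> :: "real \<Rightarrow> complex"
  assumes [measurable]: "g \<in> borel_measurable lborel" and g_bnd: "AE y in lborel. 0 \<le> y \<longrightarrow> norm (g y) \<le> C"
    and \<phi>: "integrable lborel \<phi>" "\<And>t. t < 0 \<Longrightarrow> \<phi> t = 0"
    and \<psi>: "integrable lborel \<psi>" "\<And>x. x < 0 \<Longrightarrow> \<psi> x = 0"
  shows "(\<integral>x. \<psi> x * (\<integral>t. g (x + t) * \<phi> t \<partial>lborel) \<partial>lborel)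
       = (\<integral>y. g y * (\<integral>x. \<psi> x * \<phi> (y - x) \<partial>lborel) \<partial>lborel)"
proof -
  have [measurable]: "\<phi> \<in> borel_measurable lborel" "\<psi> \<in> borel_measurable lborel"
    using \<phi> \<psi> by (auto intro: borel_measurable_integrable)
  txt \<open>Only the values of g on [0, \<infinity>) enter, so g may be replaced by a bounded truncation.\<close>
  define g' where "g' y = (if norm (g y) \<le> max C 0 then g y else 0)" for y
  have [measurable]: "g' \<in> borel_measurable lborel" unfolding g'_def by measurable
  have g'_bnd: "norm (g' y) \<le> max C 0" for y unfolding g'_def by auto
  have g'_eq: "AE y in lborel. 0 \<le> y \<longrightarrow> g' y = g y"
    using g_bnd by (rule eventually_mono) (auto simp: g'_def)
  have "(\<integral>t. g (x + t) * \<phi> t \<partial>lborel) = (\<integral>t. g' (x + t) * \<phi> t \<partial>lborel)" if "0 \<le> x" for x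
  proof (rule integral_cong_AE)
    show "AE t in lborel. g (x + t) * \<phi> t = g' (x + t) * \<phi> t"
      using AE_lborel_shift[OF g'_eq, of x] by (rule eventually_mono) (use that \<phi>(2) in \<open>force simp: add.commute\<close>)
  qed measurable
  then have "(\<integral>x. \<psi> x * (\<integral>t. g (x + t) * \<phi> t \<partial>lborel) \<partial>lborel)
      = (\<integral>x. \<psi> x * (\<integral>t. g' (x + t) * \<phi> t \<partial>lborel) \<partial>lborel)"
    using \<psi>(2) by (intro Bochner_Integration.integral_cong) (auto simp: not_le[symmetric])
  also have "\<dots> = (\<integral>y. g' y * (\<integral>x. \<psi> x * \<phi> (y - x) \<partial>lborel) \<partial>lborel)"
    by (rule integral_correlation_swap[OF _ g'_bnd \<phi>(1) \<psi>(1)]) simp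
  also have "\<dots> = (\<integral>y. g y * (\<integral>x. \<psi> x * \<phi> (y - x) \<partial>lborel) \<partial>lborel)"
  proof (rule integral_cong_AE)
    have "(\<integral>x. \<psi> x * \<phi> (y - x) \<partial>lborel) = 0" if "y < 0" for y
      using \<phi>(2) \<psi>(2) that by (rule convolution_eq_0_of_neg)
    with g'_eq show "AE y in lborel. g' y * (\<integral>x. \<psi> x * \<phi> (y - x) \<partial>lborel) = g y * (\<integral>x. \<psi> x * \<phi> (y - x) \<partial>lborel)"
      by (auto elim!: eventually_mono simp: not_le[symmetric])
  qed measurable
  finally show ?thesis .
qed

lemma Linf_on_correlation:
  fixes h \<phi> :: "real \<Rightarrow> complex"
  assumes h: "h \<in> Linf_on {0..}" and \<phi>: "integrable lborel \<phi>" "\<And>t. t < 0 \<Longrightarrow> \<phi> t = 0"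
  shows "(\<lambda>x. \<integral>t. h (x + t) * \<phi> t \<partial>lborel) \<in> Linf_on {0..}"
proof -
  have [measurable]: "h \<in> borel_measurable lborel" "\<phi> \<in> borel_measurable lborel"
    using h \<phi> by (auto dest: Linf_onD intro: borel_measurable_integrable)
  obtain C where C: "AE x in lborel. x \<in> {0..} \<longrightarrow> norm (h x) \<le> C" using Linf_onD(2)[OF h] by blast
  have "norm (\<integral>t. h (x + t) * \<phi> t \<partial>lborel) \<le> max C 0 * (\<integral>t. norm (\<phi> t) \<partial>lborel)" if "0 \<le> x" for x
  proof -
    define h' where "h' t = (if t < 0 then 0 else h (x + t))" for t
    have "(\<lambda>t. h (x + t) * \<phi> t) = (\<lambda>t. h' t * \<phi> t)" by (auto simp: h'_def \<phi>(2))
    moreover have "AE t in lborel. norm (h' t) \<le> max C 0"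
      using AE_lborel_shift[OF C, of x] by (rule eventually_mono) (use that in \<open>auto simp: h'_def add.commute\<close>)
    ultimately show ?thesis by (simp add: norm_integral_mult_le[OF _ _ \<phi>(1)] h'_def)
  qed
  then show ?thesis unfolding Linf_on_def by (auto intro!: AE_I2)
qed

lemma set_integral_correlation_eq:
  fixes q \<phi> \<psi> :: "real \<Rightarrow> complex"
  assumes [measurable]: "q \<in> borel_measurable lborel" and q: "AE y in lborel. 0 \<le> y \<longrightarrow> norm (q y) \<le> C"
    and \<phi>: "integrable lborel \<phi>" "\<And>t. t < 0 \<Longrightarrow> \<phi> t = 0" and \<psi>: "set_integrable lborel {0..} \<psi>"
  shows "set_lebesgue_integral lborel {0..} (\<lambda>x. (\<integral>t. q (x + t) * \<phi> t \<partial>lborel) * \<psi> x)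
    = set_lebesgue_integral lborel {0..} (\<lambda>y. q y * (\<integral>x. indicator {0..} x *\<^sub>R \<psi> x * \<phi> (y - x) \<partial>lborel))"
proof -
  define \<psi>0 where "\<psi>0 = (\<lambda>x. indicator {0..} x *\<^sub>R \<psi> x)"
  have \<psi>0: "integrable lborel \<psi>0" "\<And>x. x < 0 \<Longrightarrow> \<psi>0 x = 0"
    using \<psi> by (auto simp: \<psi>0_def set_integrable_def)
  have "set_lebesgue_integral lborel {0..} (\<lambda>x. (\<integral>t. q (x + t) * \<phi> t \<partial>lborel) * \<psi> x)
      = (\<integral>x. \<psi>0 x * (\<integral>t. q (x + t) * \<phi> t \<partial>lborel) \<partial>lborel)"
    unfolding set_lebesgue_integral_def \<psi>0_def by (simp add: ac_simps)
  also have "\<dots> = (\<integral>y. q y * (\<integral>x. \<psi>0 x * \<phi> (y - x) \<partial>lborel) \<partial>lborel)"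
    by (rule integral_correlation_swap_nonneg[OF _ q \<phi> \<psi>0]) simp
  also have "\<dots> = set_lebesgue_integral lborel {0..} (\<lambda>y. q y * (\<integral>x. \<psi>0 x * \<phi> (y - x) \<partial>lborel))"
  proof -
    have "(\<integral>x. \<psi>0 x * \<phi> (y - x) \<partial>lborel) = 0" if "y < 0" for y
      using \<phi>(2) \<psi>0(2) that by (rule convolution_eq_0_of_neg)
    then show ?thesis
      unfolding set_lebesgue_integral_def by (intro Bochner_Integration.integral_cong) (auto simp: indicator_def)
  qed
  finally show ?thesis by (simp add: \<psi>0_def)
qed

lemma is_wstar_lim_correlation:
  fixes g h \<phi> :: "real \<Rightarrow> complex"
  assumes lim: "is_wstar_lim F (\<lambda>s x. g (x + s)) h" and F_nonneg: "eventually (\<lambda>s. 0 \<le> s) F"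
    and g: "g \<in> Linf_on {0..}" and \<phi>: "integrable lborel \<phi>" "\<And>t. t < 0 \<Longrightarrow> \<phi> t = 0"
  shows "is_wstar_lim F (\<lambda>s x. \<integral>t. g (x + s + t) * \<phi> t \<partial>lborel) (\<lambda>x. \<integral>t. h (x + t) * \<phi> t \<partial>lborel)"
  unfolding is_wstar_lim_def
proof (intro conjI allI impI)
  have h: "h \<in> Linf_on {0..}" using lim by (simp add: is_wstar_lim_def)
  then show "(\<lambda>x. \<integral>t. h (x + t) * \<phi> t \<partial>lborel) \<in> Linf_on {0..}" by (rule Linf_on_correlation[OF _ \<phi>])
  have [measurable]: "g \<in> borel_measurable lborel" "h \<in> borel_measurable lborel"
    using g h by (auto dest: Linf_onD)
  obtain Cg where Cg: "AE y in lborel. y \<in> {0..} \<longrightarrow> norm (g y) \<le> Cg" using Linf_onD(2)[OF g] by blast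
  obtain Ch where Ch: "AE y in lborel. y \<in> {0..} \<longrightarrow> norm (h y) \<le> Ch" using Linf_onD(2)[OF h] by blast
  fix \<psi> :: "real \<Rightarrow> complex" assume \<psi>: "set_integrable lborel {0..} \<psi>"
  txt \<open>By Fubini, pairing the correlation with \<psi> amounts to pairing with the convolution K of \<psi> and \<phi>.\<close>
  define K where "K y = (\<integral>x. indicator {0..} x *\<^sub>R \<psi> x * \<phi> (y - x) \<partial>lborel)" for y
  have "K y = 0" if "y < 0" for y
    unfolding K_def by (intro convolution_eq_0_of_neg) (use \<phi>(2) that in \<open>auto simp: indicator_def\<close>)
  then have "(\<lambda>y. indicator {0..} y *\<^sub>R K y) = K" by (auto simp: indicator_def)
  moreover have "integrable lborel K"
    unfolding K_def[abs_def] by (rule integrable_convolution[OF \<phi>(1) \<psi>[unfolded set_integrable_def]])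
  ultimately have K: "set_integrable lborel {0..} K" by (simp add: set_integrable_def)
  have "eventually (\<lambda>s. set_lebesgue_integral lborel {0..} (\<lambda>y. g (y + s) * K y)
      = set_lebesgue_integral lborel {0..} (\<lambda>x. (\<integral>t. g (x + s + t) * \<phi> t \<partial>lborel) * \<psi> x)) F"
    using F_nonneg
  proof (rule eventually_mono)
    fix s :: real assume "0 \<le> s"
    then have "AE y in lborel. 0 \<le> y \<longrightarrow> norm (g (y + s)) \<le> Cg"
      using AE_lborel_shift[OF Cg, of s] by (auto elim!: eventually_mono)
    from set_integral_correlation_eq[where q="\<lambda>y. g (y + s)", OF _ this \<phi> \<psi>]
    show "set_lebesgue_integral lborel {0..} (\<lambda>y. g (y + s) * K y)
      = set_lebesgue_integral lborel {0..} (\<lambda>x. (\<integral>t. g (x + s + t) * \<phi> t \<partial>lborel) * \<psi> x)"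
      by (simp add: K_def ac_simps)
  qed
  moreover have "((\<lambda>s. set_lebesgue_integral lborel {0..} (\<lambda>y. g (y + s) * K y))
      \<longlongrightarrow> set_lebesgue_integral lborel {0..} (\<lambda>y. h y * K y)) F"
    using lim K by (simp add: is_wstar_lim_def)
  ultimately show "((\<lambda>s. set_lebesgue_integral lborel {0..} (\<lambda>x. (\<integral>t. g (x + s + t) * \<phi> t \<partial>lborel) * \<psi> x))
      \<longlongrightarrow> set_lebesgue_integral lborel {0..} (\<lambda>x. (\<integral>t. h (x + t) * \<phi> t \<partial>lborel) * \<psi> x)) F"
    using set_integral_correlation_eq[OF _ Ch[simplified] \<phi> \<psi>] by (simp add: K_def Lim_transform_eventually)
qed

lemma phi_tilde_integrable: "set_integrable lborel {0..} \<phi> \<Longrightarrow> integrable lborel (phi_tilde \<phi>)"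
proof -
  have "phi_tilde \<phi> = (\<lambda>t. indicator {0..} t *\<^sub>R \<phi> t)" by (auto simp: phi_tilde_def indicator_def)
  then show "set_integrable lborel {0..} \<phi> \<Longrightarrow> integrable lborel (phi_tilde \<phi>)"
    by (simp add: set_integrable_def)
qed

lemma Ustar_eq: "Ustar \<phi> f x = (\<integral>t. f (x + t) * phi_tilde \<phi> t \<partial>lborel)"
  unfolding Ustar_def set_lebesgue_integral_def
  by (subst integral_shift[symmetric, of _ x])
    (auto intro!: Bochner_Integration.integral_cong simp: indicator_def phi_tilde_def add.commute)

text \<open>Unlike integral_cong_AE this needs no measurability, which is not known for the
  function g in the convolution identity below.\<close>

lemma integral_diff_indicator_singleton:
  fixes f :: "real \<Rightarrow> 'b::{banach, second_countable_topology}"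
  shows "(\<integral>t. f t - indicator {a} t *\<^sub>R c \<partial>lborel) = (\<integral>t. f t \<partial>lborel)"
proof -
  have point: "integrable lborel (\<lambda>t. indicator {a} t *\<^sub>R c)" by simp
  show ?thesis
  proof (cases "integrable lborel f")
    case True
    with point show ?thesis by simp
  next
    case False
    then have "\<not> integrable lborel (\<lambda>t. f t - indicator {a} t *\<^sub>R c)"
      using Bochner_Integration.integrable_add[OF _ point] by fastforce
    with False show ?thesis by (simp add: not_integrable_integral_eq)
  qed
qed

lemma integral_phi_tilde_eq_conv:
  "(\<integral>t. g (x + t) * phi_tilde \<phi> t \<partial>lborel) = conv g (phi_star \<phi>) x"
proof -
  have "conv g (phi_star \<phi>) x = (\<integral>t. g (x + t) * phi_star \<phi> (- t) \<partial>lborel)"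
    unfolding conv_def by (subst lborel_integral_real_affine[where c="-1" and t=0]) auto
  also have "\<dots> = (\<integral>t. g (x + t) * phi_tilde \<phi> t - indicator {0} t *\<^sub>R (g x * phi_tilde \<phi> 0) \<partial>lborel)"
    by (rule Bochner_Integration.integral_cong) (auto simp: phi_star_def phi_tilde_def indicator_def)
  finally show ?thesis by (simp only: integral_diff_indicator_singleton)
qed

lemma g_omega_pos_Ustar:
  assumes \<eta>: "\<eta> \<in> Nstar" and u: "0 \<le> u" and \<phi>: "set_integrable lborel {0..} \<phi>" and f: "f \<in> Linf_on {0..}"
  shows "AE x in lborel. 0 \<le> x \<longrightarrow>
      g_omega_pos (Ustar \<phi> f) \<eta> u x = (\<integral>t. g_omega f \<eta> u (x + t) * phi_tilde \<phi> t \<partial>lborel)"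
proof -
  let ?F = "omega_filter \<eta> u"
  have lim: "is_wstar_lim ?F (\<lambda>s x. Ustar \<phi> f (x + s)) (\<lambda>x. \<integral>t. g_omega_pos f \<eta> u (x + t) * phi_tilde \<phi> t \<partial>lborel)"
    using is_wstar_lim_correlation[OF g_omega_pos_is_wstar_lim[OF \<eta> u f] omega_filter_nonneg[OF u] f
        phi_tilde_integrable[OF \<phi>]]
    by (simp add: Ustar_eq phi_tilde_def add.assoc)
  then have "is_wstar_lim ?F (\<lambda>s x. Ustar \<phi> f (x + s)) (g_omega_pos (Ustar \<phi> f) \<eta> u)"
    unfolding g_omega_pos_def by (rule is_wstar_lim_wstar_lim)
  moreover have "?F \<noteq> bot" using omega_filter_is_ultrafilter[OF \<eta>] by (simp add: is_ultrafilter_def)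
  ultimately have "AE x in lborel. 0 \<le> x \<longrightarrow>
      g_omega_pos (Ustar \<phi> f) \<eta> u x = (\<integral>t. g_omega_pos f \<eta> u (x + t) * phi_tilde \<phi> t \<partial>lborel)"
    by (rule is_wstar_lim_unique[OF _ lim])
  moreover have "(\<integral>t. g_omega_pos f \<eta> u (x + t) * phi_tilde \<phi> t \<partial>lborel)
      = (\<integral>t. g_omega f \<eta> u (x + t) * phi_tilde \<phi> t \<partial>lborel)" if "0 \<le> x" for x
    using that by (intro Bochner_Integration.integral_cong) (auto simp: g_omega_def phi_tilde_def)
  ultimately show ?thesis by (auto elim: eventually_mono)
qed

lemma integral_g_omega_tau_inv:
  assumes \<eta>: "\<eta> \<in> Nstar" and u: "0 \<le> u" and \<phi>: "set_integrable lborel {0..} \<phi>" and f: "f \<in> Linf_on {0..}"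
    and x: "0 \<le> x + real N"
  shows "(\<integral>t. g_omega f (tau_inv N \<eta>) u (x + real N + t) * phi_tilde \<phi> t \<partial>lborel)
    = (\<integral>t. g_omega f \<eta> u (x + t) * phi_tilde \<phi> t \<partial>lborel)"
proof (rule integral_cong_AE)
  have [measurable]: "phi_tilde \<phi> \<in> borel_measurable lborel"
    using phi_tilde_integrable[OF \<phi>] by (rule borel_measurable_integrable)
  have [measurable]: "g_omega f (tau_inv N \<eta>) u \<in> borel_measurable lborel" "g_omega f \<eta> u \<in> borel_measurable lborel"
    using g_omega_measurable[OF tau_inv_Nstar[OF \<eta>] u f] g_omega_measurable[OF \<eta> u f] by auto
  show "(\<lambda>t. g_omega f (tau_inv N \<eta>) u (x + real N + t) * phi_tilde \<phi> t) \<in> borel_measurable lborel"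
    "(\<lambda>t. g_omega f \<eta> u (x + t) * phi_tilde \<phi> t) \<in> borel_measurable lborel"
    by measurable
  show "AE t in lborel. g_omega f (tau_inv N \<eta>) u (x + real N + t) * phi_tilde \<phi> t
      = g_omega f \<eta> u (x + t) * phi_tilde \<phi> t"
    using AE_lborel_shift[OF g_omega_tau_inv[OF \<eta> u f, of N], of x]
  proof (rule eventually_mono)
    fix t assume shift: "- real N \<le> t + x \<longrightarrow> g_omega f (tau_inv N \<eta>) u (real N + (t + x)) = g_omega f \<eta> u (t + x)"
    show "g_omega f (tau_inv N \<eta>) u (x + real N + t) * phi_tilde \<phi> t = g_omega f \<eta> u (x + t) * phi_tilde \<phi> t"
    proof (cases "0 \<le> t")
      case True
      with x shift show ?thesis by (simp add: ac_simps)
    qed (simp add: phi_tilde_def)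
  qed
qed

lemma g_omega_Ustar:
  assumes \<eta>: "\<eta> \<in> Nstar" and u: "0 \<le> u" and \<phi>: "set_integrable lborel {0..} \<phi>" and f: "f \<in> Linf_on {0..}"
  shows "AE x in lborel. g_omega (Ustar \<phi> f) \<eta> u x = (\<integral>t. g_omega f \<eta> u (x + t) * phi_tilde \<phi> t \<partial>lborel)"
proof -
  have "AE x in lborel. \<forall>N. 0 \<le> x + real N \<longrightarrow>
      g_omega_pos (Ustar \<phi> f) (tau_inv N \<eta>) u (x + real N)
        = (\<integral>t. g_omega f (tau_inv N \<eta>) u (x + real N + t) * phi_tilde \<phi> t \<partial>lborel)"
    unfolding AE_all_countable
    using AE_lborel_shift[OF g_omega_pos_Ustar[OF tau_inv_Nstar[OF \<eta>] u \<phi> f]] by blast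
  then show ?thesis
  proof (rule eventually_mono)
    fix x :: real
    define N where "N = nat \<lceil>- x\<rceil>"
    have N: "0 \<le> x + real N" unfolding N_def by linarith
    assume "\<forall>N. 0 \<le> x + real N \<longrightarrow>
      g_omega_pos (Ustar \<phi> f) (tau_inv N \<eta>) u (x + real N)
        = (\<integral>t. g_omega f (tau_inv N \<eta>) u (x + real N + t) * phi_tilde \<phi> t \<partial>lborel)"
    with N have "g_omega (Ustar \<phi> f) \<eta> u x
        = (\<integral>t. g_omega f (tau_inv N \<eta>) u (x + real N + t) * phi_tilde \<phi> t \<partial>lborel)"
      by (simp add: g_omega_eq[OF \<eta>] N_def ac_simps)
    with integral_g_omega_tau_inv[OF \<eta> u \<phi> f N]
    show "g_omega (Ustar \<phi> f) \<eta> u x = (\<integral>t. g_omega f \<eta> u (x + t) * phi_tilde \<phi> t \<partial>lborel)"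
      by simp
  qed
qed

theorem theorem4p1:
  fixes \<phi> f :: "real \<Rightarrow> complex" and \<eta> :: "nat filter" and u :: real
  assumes "set_integrable lborel {0..} \<phi>"
    and "f \<in> Linf_on {0..}"
    and "\<eta> \<in> Nstar" and "u \<in> {0..1}"
  shows "(AE x in lborel.
            g_omega (Ustar \<phi> f) \<eta> u x
              = integral\<^sup>L lborel (\<lambda>t. g_omega f \<eta> u (x + t) * phi_tilde \<phi> t))
       \<and> (\<forall>x. integral\<^sup>L lborel (\<lambda>t. g_omega f \<eta> u (x + t) * phi_tilde \<phi> t)
              = conv (g_omega f \<eta> u) (phi_star \<phi>) x)"
  using g_omega_Ustar[OF assms(3) _ assms(1,2)] assms(4) integral_phi_tilde_eq_conv by simp

end
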